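(* Let $\rho>e^q$, $0<T<T_{\max}$ and let $(A_t)$ be a Delaunay residue family. There exist $e^q<R<\rho$ and $0<T'<T$ such that for all $t\in(-T',T')$, $A_t=H_tD_tH_t^{-1}$ with $H_t\in\Lambda\mathrm{SU}(2)_R$, $D_t$ diagonal and $iD_t\in\Lambda\mathfrak{su}(2)_R$. Moreover $H_t$ and $D_t$ depend smoothly on $t$.
   Context: Fix $H>1$, $q=\operatorname{arcoth}H$. For $\rho>1$ and a matrix group or algebra $G$, $\Lambda G_\rho$ is the set of smooth maps $f:\mathbb S^1\to G$ whose Fourier expansion $f=\sum_{i}f_i\lambda^i$ satisfies $\|f\|_\rho=\sum_i|f_i|\rho^{|i|}<\infty$ (Frobenius norm $|\cdot|$). For $r,s\in\mathbb R$ let $A_{r,s}(\lambda)=\begin{pmatrix}0&r\lambda^{-1}+s\\ r\lambda+s&0\end{pmatrix}$ and $T_{\max}=\frac{\tanh(q/2)}{2}$. A Delaunay residue family is $A_t=A_{r(t),s(t)}$ where $r,s$ are continuous real functions of $t<T_{\max}$ with $r^2+s^2+2rs\cosh q=\frac14$ and $4rs\sinh q=t$, and either $(r(0),s(0))=(\frac12,0)$, $r>s$ (spherical family) or $(r(0),s(0))=(0,\frac12)$, $r<s$ (catenoidal family). *)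

theory Defs
  imports "HOL-Analysis.Analysis"
begin

definition arcoth :: "real \<Rightarrow> real" where
  "arcoth x = ln ((x + 1) / (x - 1)) / 2"

definition Tmax :: "real \<Rightarrow> real" where
  "Tmax q = tanh (q / 2) / 2"

type_synonym mat2 = "complex^2^2"

text \<open>A loop is represented by its Fourier coefficients f_i (i ranging over the integers).\<close>
type_synonym loop = "int \<Rightarrow> mat2"

definition loop_eval :: "loop \<Rightarrow> complex \<Rightarrow> mat2" where
  "loop_eval f z = (\<chi> a b. (\<Sum>\<^sub>\<infinity>i. (f i $ a $ b) * z powi i))"

definition rho_norm :: "real \<Rightarrow> loop \<Rightarrow> real" where
  "rho_norm R f = (\<Sum>\<^sub>\<infinity>i. norm (f i) * R ^ nat \<bar>i\<bar>)"

definition in_Lambda :: "real \<Rightarrow> loop \<Rightarrow> bool" where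
  "in_Lambda R f \<longleftrightarrow> (\<lambda>i. norm (f i) * R ^ nat \<bar>i\<bar>) summable_on UNIV"

definition adjoint2 :: "mat2 \<Rightarrow> mat2" where
  "adjoint2 M = (\<chi> a b. cnj (M $ b $ a))"

definition SU2 :: "mat2 set" where
  "SU2 = {M. M ** adjoint2 M = mat 1 \<and> det M = 1}"

definition su2 :: "mat2 set" where
  "su2 = {X. X + adjoint2 X = 0 \<and> trace X = 0}"

definition is_diagonal :: "mat2 \<Rightarrow> bool" where
  "is_diagonal M \<longleftrightarrow> (\<forall>a b. a \<noteq> b \<longrightarrow> M $ a $ b = 0)"

definition LambdaSU2 :: "real \<Rightarrow> loop set" where
  "LambdaSU2 R = {f. in_Lambda R f \<and> (\<forall>z. cmod z = 1 \<longrightarrow> loop_eval f z \<in> SU2)}"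

definition Lambdasu2 :: "real \<Rightarrow> loop set" where
  "Lambdasu2 R = {f. in_Lambda R f \<and> (\<forall>z. cmod z = 1 \<longrightarrow> loop_eval f z \<in> su2)}"

definition A_rs :: "real \<Rightarrow> real \<Rightarrow> complex \<Rightarrow> mat2" where
  "A_rs r s z = (\<chi> a b. if a = 1 \<and> b = 2 then of_real r * inverse z + of_real s
                        else if a = 2 \<and> b = 1 then of_real r * z + of_real s else 0)"

definition delaunay_residue_family :: "real \<Rightarrow> (real \<Rightarrow> real) \<Rightarrow> (real \<Rightarrow> real) \<Rightarrow> bool" where
  "delaunay_residue_family q r s \<longleftrightarrow>
     continuous_on {..<Tmax q} r \<and> continuous_on {..<Tmax q} s \<and>
     (\<forall>t < Tmax q. (r t)\<^sup>2 + (s t)\<^sup>2 + 2 * r t * s t * cosh q = 1/4 \<and> 4 * r t * s t * sinh q = t) \<and>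
     ((r 0 = 1/2 \<and> s 0 = 0 \<and> (\<forall>t < Tmax q. r t > s t)) \<or>
      (r 0 = 0 \<and> s 0 = 1/2 \<and> (\<forall>t < Tmax q. r t < s t)))"

definition loop_has_deriv :: "real \<Rightarrow> (real \<Rightarrow> loop) \<Rightarrow> (real \<Rightarrow> loop) \<Rightarrow> real \<Rightarrow> bool" where
  "loop_has_deriv R F F' t \<longleftrightarrow>
     ((\<lambda>h. rho_norm R (\<lambda>i. (1 / h) *\<^sub>R (F (t + h) i - F t i) - F' t i)) \<longlongrightarrow> 0) (at 0)"

definition loop_smooth_on :: "real \<Rightarrow> real set \<Rightarrow> (real \<Rightarrow> loop) \<Rightarrow> bool" where
  "loop_smooth_on R I F \<longleftrightarrow>
     (\<exists>Fs :: nat \<Rightarrow> real \<Rightarrow> loop. (\<forall>t\<in>I. Fs 0 t = F t) \<and>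
        (\<forall>k. \<forall>t\<in>I. in_Lambda R (Fs k t) \<and> loop_has_deriv R (Fs k) (Fs (Suc k)) t))"

end

theory Submission
  imports Defs
begin

text \<open>On the unit circle \<open>A(\<lambda>) = [[0, w\<^sup>*], [w, 0]]\<close> with \<open>w = r\<lambda> + s\<close>, so it is
  diagonalised by an explicit unitary matrix \<open>H\<close>, built from \<open>w / |w|\<close>, with
  \<open>D = diag(|w|, -|w|)\<close>. The residue equations give
  \<open>|w|\<^sup>2 = (1 + t (\<lambda> + \<lambda>\<^sup>-\<^sup>1 - 2 cosh q) / sinh q) / 4\<close> and express \<open>r, s\<close> through square roots
  of affine functions of \<open>t\<close>. Expanding \<open>|w|\<^sup>\<plusminus>\<^sup>1\<close> by the binomial series and \<open>r, s\<close> by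
  their Taylor series writes every entry of \<open>H\<close> and \<open>D\<close> as a power series \<open>\<Sum> t\<^sup>n C\<^sub>n\<close>
  whose coefficients are Laurent polynomials in \<open>\<lambda>\<close> with \<open>\<parallel>C\<^sub>n\<parallel>\<^sub>R\<close> growing at most
  geometrically. For small \<open>|t|\<close> these series, and all their termwise derivatives, converge in
  \<open>\<Lambda>\<^sub>R\<close>; this gives both the factorization and the smoothness in \<open>t\<close>.\<close>

section \<open>Power series in \<open>t\<close> with coefficients in \<open>\<Lambda>\<^sub>R\<close>\<close>

text \<open>A coefficient array \<open>C\<close> describes the family of loops \<open>t \<mapsto> \<Sum>\<^sub>n t^n C\<^sub>n\<close>, where
  \<open>C n i\<close> is the \<open>i\<close>-th Fourier coefficient of \<open>C\<^sub>n\<close>. \<open>powser_in_Lambda R d C\<close> says that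
  this series converges absolutely in the norm \<open>\<parallel>\<cdot>\<parallel>\<^sub>R\<close> for \<open>\<bar>t\<bar> < d\<close>.\<close>

definition powser_eval :: "(nat \<Rightarrow> int \<Rightarrow> 'a::real_normed_vector) \<Rightarrow> real \<Rightarrow> int \<Rightarrow> 'a" where
  "powser_eval C t i = (\<Sum>\<^sub>\<infinity>n. t ^ n *\<^sub>R C n i)"

definition powser_in_Lambda :: "real \<Rightarrow> real \<Rightarrow> (nat \<Rightarrow> int \<Rightarrow> 'a::real_normed_vector) \<Rightarrow> bool" where
  "powser_in_Lambda R d C \<longleftrightarrow> (\<forall>\<rho>. 0 \<le> \<rho> \<and> \<rho> < d \<longrightarrow>
     (\<lambda>(n, i). norm (C n i) * R ^ nat \<bar>i\<bar> * \<rho> ^ n) summable_on UNIV)"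

definition powser_deriv :: "(nat \<Rightarrow> int \<Rightarrow> 'a::real_normed_vector) \<Rightarrow> nat \<Rightarrow> int \<Rightarrow> 'a" where
  "powser_deriv C n i = real (Suc n) *\<^sub>R C (Suc n) i"

lemma powser_in_LambdaD:
  "powser_in_Lambda R d C \<Longrightarrow> 0 \<le> \<rho> \<Longrightarrow> \<rho> < d \<Longrightarrow>
     (\<lambda>(n, i). norm (C n i) * R ^ nat \<bar>i\<bar> * \<rho> ^ n) summable_on UNIV"
  unfolding powser_in_Lambda_def by auto

lemma summable_on_pair_column:
  fixes f :: "'a \<times> 'b \<Rightarrow> real"
  assumes "f summable_on UNIV"
  shows "(\<lambda>x. f (x, y)) summable_on UNIV" and "(\<lambda>y. \<Sum>\<^sub>\<infinity>x. f (x, y)) summable_on UNIV"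
proof -
  have swapped: "(\<lambda>(y, x). f (x, y)) summable_on UNIV \<times> UNIV"
    using assms summable_on_swap[of f UNIV UNIV] by (simp add: case_prod_unfold)
  show "(\<lambda>x. f (x, y)) summable_on UNIV"
    using summable_on_SigmaD1[of "\<lambda>y x. f (x, y)" UNIV "\<lambda>_. UNIV"] swapped by auto
  show "(\<lambda>y. \<Sum>\<^sub>\<infinity>x. f (x, y)) summable_on UNIV"
    using summable_on_Sigma_banach[of "\<lambda>y x. f (x, y)" UNIV "\<lambda>_. UNIV"] swapped by auto
qed

lemma linear_times_power_bounded:
  fixes a b :: real
  assumes "0 \<le> a" "a < b"
  obtains K where "\<And>n. real n * a ^ n \<le> K * b ^ n"
proof -
  have "(\<lambda>n. real n * (a / b) ^ n) \<longlonglongrightarrow> 0"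
    using powser_times_n_limit_0[of "a / b"] assms by simp
  then have "Bseq (\<lambda>n. real n * (a / b) ^ n)"
    by (rule convergent_imp_Bseq[OF convergentI])
  then obtain K where K: "\<And>n. norm (real n * (a / b) ^ n) \<le> K"
    by (auto simp: Bseq_def)
  have "real n * a ^ n \<le> K * b ^ n" for n
  proof -
    have "real n * a ^ n = real n * (a / b) ^ n * b ^ n"
      using assms by (simp add: power_divide)
    also have "\<dots> \<le> K * b ^ n"
      using K[of n] assms by (intro mult_right_mono) auto
    finally show ?thesis .
  qed
  then show ?thesis by (rule that)
qed

lemma quadratic_times_power_bounded:
  fixes a b :: real
  assumes "0 < a" "a < b"
  obtains K where "\<And>n. real n * real (n - 1) * a ^ (n - 2) \<le> K * b ^ n"
proof -
  define c where "c = (a + b) / 2"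
  have c: "a < c" "c < b" using assms unfolding c_def by auto
  obtain K1 where K1: "\<And>n. real n * a ^ n \<le> K1 * c ^ n"
    using linear_times_power_bounded[of a c] assms c by auto
  obtain K2 where K2: "\<And>n. real n * c ^ n \<le> K2 * b ^ n"
    using linear_times_power_bounded[of c b] assms c by auto
  have "0 < K1 * c"
    using K1[of 1] assms by simp
  then have K1_nonneg: "K1 \<ge> 0"
    using assms c by (simp add: zero_less_mult_iff)
  have "real n * real (n - 1) * a ^ (n - 2) \<le> (K1 * K2 / a\<^sup>2) * b ^ n" for n
  proof (cases "n < 2")
    case True
    then show ?thesis
      using K1_nonneg K2[of 0] assms by (auto simp: less_2_cases_iff)
  next
    case False
    then have "a ^ n = a\<^sup>2 * a ^ (n - 2)"
      by (metis le_add_diff_inverse not_less power_add)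
    then have "real n * real (n - 1) * a ^ (n - 2) \<le> real n * (real n * a ^ n) / a\<^sup>2"
      using assms by (simp add: field_simps mult_mono)
    also have "\<dots> \<le> real n * (K1 * c ^ n) / a\<^sup>2"
      using K1[of n] assms by (intro divide_right_mono mult_left_mono) auto
    also have "\<dots> = K1 * (real n * c ^ n) / a\<^sup>2"
      by simp
    also have "\<dots> \<le> K1 * (K2 * b ^ n) / a\<^sup>2"
      using K2[of n] K1_nonneg by (intro divide_right_mono mult_left_mono) auto
    finally show ?thesis
      by simp
  qed
  then show ?thesis by (rule that)
qed

lemma powser_in_Lambda_deriv:
  assumes C: "powser_in_Lambda R d C" and R: "R \<ge> 0"
  shows "powser_in_Lambda R d (powser_deriv C)"
  unfolding powser_in_Lambda_def
proof (intro allI impI)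
  fix \<rho> :: real
  assume \<rho>: "0 \<le> \<rho> \<and> \<rho> < d"
  define \<rho>' where "\<rho>' = (\<rho> + d) / 2"
  have \<rho>': "\<rho> < \<rho>'" "\<rho>' < d" using \<rho> unfolding \<rho>'_def by auto
  obtain K where K: "\<And>n. real n * \<rho> ^ n \<le> K * \<rho>' ^ n"
    using linear_times_power_bounded[of \<rho> \<rho>'] \<rho> \<rho>' by auto
  define K' where "K' = (K + 1) / \<rho>'"
  have K': "real (Suc n) * \<rho> ^ n \<le> K' * \<rho>' ^ Suc n" for n
  proof -
    have "real (Suc n) * \<rho> ^ n = real n * \<rho> ^ n + \<rho> ^ n"
      by (simp add: algebra_simps)
    also have "\<dots> \<le> K * \<rho>' ^ n + \<rho>' ^ n"
      using K[of n] \<rho> \<rho>' by (intro add_mono power_mono) auto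
    also have "\<dots> = K' * \<rho>' ^ Suc n"
      using \<rho> \<rho>' unfolding K'_def by (simp add: field_simps)
    finally show ?thesis .
  qed
  define g where "g = (\<lambda>(n, i). norm (C n i) * R ^ nat \<bar>i\<bar> * \<rho>' ^ n)"
  have "g summable_on UNIV"
    using powser_in_LambdaD[OF C, of \<rho>'] \<rho> \<rho>' unfolding g_def by auto
  then have "g summable_on range (\<lambda>(n, i). (Suc n, i))"
    using summable_on_subset_banach by blast
  then have "(\<lambda>(n, i). g (Suc n, i)) summable_on UNIV"
    by (subst (asm) summable_on_reindex) (auto simp: inj_on_def o_def case_prod_unfold)
  then have bound: "(\<lambda>(n, i). K' * g (Suc n, i)) summable_on UNIV"
    using summable_on_cmult_right by (fastforce simp: case_prod_unfold)
  show "(\<lambda>(n, i). norm (powser_deriv C n i) * R ^ nat \<bar>i\<bar> * \<rho> ^ n) summable_on UNIV"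
  proof (rule summable_on_comparison_test[OF bound], clarify)
    fix n i
    have "norm (powser_deriv C n i) * R ^ nat \<bar>i\<bar> * \<rho> ^ n
        = (real (Suc n) * \<rho> ^ n) * (norm (C (Suc n) i) * R ^ nat \<bar>i\<bar>)"
      unfolding powser_deriv_def by simp
    also have "\<dots> \<le> (K' * \<rho>' ^ Suc n) * (norm (C (Suc n) i) * R ^ nat \<bar>i\<bar>)"
      using K'[of n] R by (intro mult_right_mono) auto
    also have "\<dots> = K' * g (Suc n, i)"
      unfolding g_def by simp
    finally show "norm (powser_deriv C n i) * R ^ nat \<bar>i\<bar> * \<rho> ^ n \<le> K' * g (Suc n, i)" .
  qed (use \<rho> R in auto)
qed

lemma powser_in_Lambda_deriv_iterate:
  "powser_in_Lambda R d C \<Longrightarrow> R \<ge> 0 \<Longrightarrow> powser_in_Lambda R d ((powser_deriv ^^ k) C)"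
  by (induction k) (auto intro: powser_in_Lambda_deriv)

context
  fixes R d :: real and C :: "nat \<Rightarrow> int \<Rightarrow> 'a::banach" and t :: real
  assumes C: "powser_in_Lambda R d C" and R: "R \<ge> 1" and t: "\<bar>t\<bar> < d"
begin

private definition weights :: "nat \<times> int \<Rightarrow> real" where
  "weights = (\<lambda>(n, i). norm (C n i) * R ^ nat \<bar>i\<bar> * \<bar>t\<bar> ^ n)"

private lemma weights_summable: "weights summable_on UNIV"
  using powser_in_LambdaD[OF C, of "\<bar>t\<bar>"] t unfolding weights_def by auto

lemma powser_abs_summable: "(\<lambda>n. norm (t ^ n *\<^sub>R C n i)) summable_on UNIV"
proof (rule summable_on_comparison_test[OF summable_on_pair_column(1)[OF weights_summable]])
  fix n
  have "norm (t ^ n *\<^sub>R C n i) = norm (C n i) * 1 * \<bar>t\<bar> ^ n"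
    by (simp add: power_abs)
  also have "\<dots> \<le> norm (C n i) * R ^ nat \<bar>i\<bar> * \<bar>t\<bar> ^ n"
    using R by (intro mult_right_mono mult_left_mono) auto
  finally show "norm (t ^ n *\<^sub>R C n i) \<le> weights (n, i)"
    unfolding weights_def by simp
qed simp

lemma powser_eval_has_sum: "((\<lambda>n. t ^ n *\<^sub>R C n i) has_sum powser_eval C t i) UNIV"
  unfolding powser_eval_def
  by (rule has_sum_infsum[OF abs_summable_summable[OF powser_abs_summable]])

lemma powser_eval_weighted_summable: "(\<lambda>i. norm (powser_eval C t i) * R ^ nat \<bar>i\<bar>) summable_on UNIV"
proof (rule summable_on_comparison_test[OF summable_on_pair_column(2)[OF weights_summable]])
  fix i
  have "norm (powser_eval C t i) \<le> (\<Sum>\<^sub>\<infinity>n. norm (t ^ n *\<^sub>R C n i))"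
    unfolding powser_eval_def using powser_abs_summable by (rule norm_infsum_bound)
  then have "norm (powser_eval C t i) * R ^ nat \<bar>i\<bar> \<le> (\<Sum>\<^sub>\<infinity>n. norm (t ^ n *\<^sub>R C n i)) * R ^ nat \<bar>i\<bar>"
    using R by (intro mult_right_mono) auto
  also have "\<dots> = (\<Sum>\<^sub>\<infinity>n. weights (n, i))"
    unfolding weights_def infsum_cmult_left'[symmetric] by (simp add: power_abs mult_ac)
  finally show "norm (powser_eval C t i) * R ^ nat \<bar>i\<bar> \<le> (\<Sum>\<^sub>\<infinity>n. weights (n, i))" .
qed (use R in simp)

end

lemma has_sum_diff:
  fixes f g :: "'a \<Rightarrow> 'b::topological_ab_group_add"
  assumes "(f has_sum a) A" "(g has_sum b) A"
  shows "((\<lambda>x. f x - g x) has_sum (a - b)) A"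
proof -
  have "((\<lambda>x. - g x) has_sum - b) A" using assms(2) by (simp add: has_sum_uminus)
  from has_sum_add[OF assms(1) this] show ?thesis by simp
qed

lemma has_sum_Suc_shift:
  fixes f :: "nat \<Rightarrow> 'a::topological_comm_monoid_add"
  assumes "f 0 = 0"
  shows "((\<lambda>n. f (Suc n)) has_sum S) UNIV \<longleftrightarrow> (f has_sum S) UNIV"
proof -
  have "((\<lambda>n. f (Suc n)) has_sum S) UNIV \<longleftrightarrow> (f has_sum S) {0<..}"
    by (rule has_sum_reindex_bij_witness[where i="\<lambda>b. b - 1" and j=Suc]) auto
  also have "\<dots> \<longleftrightarrow> (f has_sum S) UNIV"
    by (rule has_sum_cong_neutral) (simp_all add: assms)
  finally show ?thesis .
qed

lemma powser_deriv_eval_has_sum: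
  fixes C :: "nat \<Rightarrow> int \<Rightarrow> 'a::banach"
  assumes "powser_in_Lambda R d C" "R \<ge> 1" "\<bar>t\<bar> < d"
  shows "((\<lambda>n. (real n * t ^ (n - 1)) *\<^sub>R C n i) has_sum powser_eval (powser_deriv C) t i) UNIV"
proof -
  have "powser_in_Lambda R d (powser_deriv C)"
    by (rule powser_in_Lambda_deriv) (use assms in auto)
  from powser_eval_has_sum[OF this assms(2,3)]
  have "((\<lambda>n. t ^ n *\<^sub>R powser_deriv C n i) has_sum powser_eval (powser_deriv C) t i) UNIV" .
  then show ?thesis
    by (subst has_sum_Suc_shift[symmetric]) (auto simp: powser_deriv_def mult_ac)
qed

lemma infsum_le_infsum_columns:
  fixes g :: "'a \<times> 'b \<Rightarrow> real"
  assumes g: "g summable_on UNIV" and f: "\<And>i. 0 \<le> f i" "\<And>i. f i \<le> (\<Sum>\<^sub>\<infinity>n. g (n, i))"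
  shows "(\<Sum>\<^sub>\<infinity>i. f i) \<le> (\<Sum>\<^sub>\<infinity>i. \<Sum>\<^sub>\<infinity>n. g (n, i))"
proof -
  have "(\<lambda>i. \<Sum>\<^sub>\<infinity>n. g (n, i)) summable_on UNIV"
    by (rule summable_on_pair_column(2)[OF g])
  moreover from this have "f summable_on UNIV"
    by (rule summable_on_comparison_test) (use f in auto)
  ultimately show ?thesis
    using f by (intro infsum_mono) auto
qed

lemma powser_quotient_coeff_le:
  fixes C :: "nat \<Rightarrow> int \<Rightarrow> 'a::banach"
  assumes C: "powser_in_Lambda R d C" and R: "R \<ge> 1"
    and h: "h \<noteq> 0" "\<bar>t\<bar> + \<bar>h\<bar> < \<rho>" "\<rho> < d"
    and K: "\<And>n. real n * real (n - 1) * \<rho> ^ (n - 2) \<le> K * \<rho>' ^ n"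
    and column: "(\<lambda>n. norm (C n i) * \<rho>' ^ n) summable_on UNIV"
  shows "norm ((1 / h) *\<^sub>R (powser_eval C (t + h) i - powser_eval C t i) - powser_eval (powser_deriv C) t i)
      \<le> \<bar>h\<bar> * K * (\<Sum>\<^sub>\<infinity>n. norm (C n i) * \<rho>' ^ n)"
proof -
  define c where "c = (\<lambda>n. ((t + h) ^ n - t ^ n) / h - real n * t ^ (n - 1))"
  have t: "\<bar>t\<bar> < d" "\<bar>t + h\<bar> < d"
    using h by auto
  have "((\<lambda>n. (1 / h) *\<^sub>R ((t + h) ^ n *\<^sub>R C n i - t ^ n *\<^sub>R C n i) - (real n * t ^ (n - 1)) *\<^sub>R C n i)
      has_sum ((1 / h) *\<^sub>R (powser_eval C (t + h) i - powser_eval C t i) - powser_eval (powser_deriv C) t i)) UNIV"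
    by (intro has_sum_diff has_sum_scaleR powser_eval_has_sum[OF C R t(2)]
        powser_eval_has_sum[OF C R t(1)] powser_deriv_eval_has_sum[OF C R t(1)])
  then have "((\<lambda>n. c n *\<^sub>R C n i) has_sum
      ((1 / h) *\<^sub>R (powser_eval C (t + h) i - powser_eval C t i) - powser_eval (powser_deriv C) t i)) UNIV"
    unfolding c_def by (simp add: scaleR_diff_left[symmetric])
  moreover have "((\<lambda>n. \<bar>h\<bar> * K * (norm (C n i) * \<rho>' ^ n))
      has_sum \<bar>h\<bar> * K * (\<Sum>\<^sub>\<infinity>n. norm (C n i) * \<rho>' ^ n)) UNIV"
    by (rule has_sum_cmult_right[OF has_sum_infsum[OF column]])
  moreover have "norm (c n *\<^sub>R C n i) \<le> \<bar>h\<bar> * K * (norm (C n i) * \<rho>' ^ n)" for n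
  proof -
    have "\<bar>c n\<bar> \<le> real n * real (n - 1) * \<rho> ^ (n - 2) * \<bar>h\<bar>"
      using lemma_termdiff3[of h t \<rho> n] h unfolding c_def by auto
    also have "\<dots> \<le> K * \<rho>' ^ n * \<bar>h\<bar>"
      using K[of n] by (intro mult_right_mono) auto
    finally show ?thesis
      using mult_right_mono[of "\<bar>c n\<bar>" "K * \<rho>' ^ n * \<bar>h\<bar>" "norm (C n i)"] by (simp add: mult_ac)
  qed
  ultimately show ?thesis
    by (rule norm_infsum_le)
qed

lemma powser_quotient_error_le:
  fixes C :: "nat \<Rightarrow> int \<Rightarrow> 'a::banach"
  assumes C: "powser_in_Lambda R d C" and R: "R \<ge> 1" and t: "\<bar>t\<bar> < d"
  obtains S where "\<forall>\<^sub>F h in at 0. (\<Sum>\<^sub>\<infinity>i. norm ((1 / h) *\<^sub>R (powser_eval C (t + h) i - powser_eval C t i)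
    - powser_eval (powser_deriv C) t i) * R ^ nat \<bar>i\<bar>) \<le> \<bar>h\<bar> * S"
proof -
  define \<rho>1 where "\<rho>1 = (\<bar>t\<bar> + d) / 2"
  define \<rho>2 where "\<rho>2 = (\<rho>1 + d) / 2"
  have \<rho>: "\<bar>t\<bar> < \<rho>1" "\<rho>1 < \<rho>2" "\<rho>2 < d" "0 < \<rho>1"
    using t unfolding \<rho>1_def \<rho>2_def by auto
  obtain K where K: "\<And>n. real n * real (n - 1) * \<rho>1 ^ (n - 2) \<le> K * \<rho>2 ^ n"
    using quadratic_times_power_bounded[of \<rho>1 \<rho>2] \<rho> by auto
  define g where "g = (\<lambda>(n, i). K * (norm (C n i) * \<rho>2 ^ n) * R ^ nat \<bar>i\<bar>)"
  have g: "g summable_on UNIV"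
    unfolding g_def using summable_on_cmult_right[OF powser_in_LambdaD[OF C, of \<rho>2]] \<rho>
    by (auto simp: case_prod_unfold mult_ac)
  have column: "(\<lambda>n. norm (C n i) * \<rho>2 ^ n) summable_on UNIV" for i
    using powser_abs_summable[OF C R, of \<rho>2 i] \<rho> by (simp add: mult.commute)
  define quot where "quot = (\<lambda>h i. (1 / h) *\<^sub>R (powser_eval C (t + h) i - powser_eval C t i)
                                  - powser_eval (powser_deriv C) t i)"
  have "(\<Sum>\<^sub>\<infinity>i. norm (quot h i) * R ^ nat \<bar>i\<bar>) \<le> \<bar>h\<bar> * (\<Sum>\<^sub>\<infinity>i. \<Sum>\<^sub>\<infinity>n. g (n, i))"
    if h: "h \<noteq> 0" "\<bar>h\<bar> < \<rho>1 - \<bar>t\<bar>" for h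
  proof -
    have "norm (quot h i) * R ^ nat \<bar>i\<bar> \<le> (\<Sum>\<^sub>\<infinity>n. \<bar>h\<bar> * g (n, i))" for i
    proof -
      have "norm (quot h i) \<le> \<bar>h\<bar> * K * (\<Sum>\<^sub>\<infinity>n. norm (C n i) * \<rho>2 ^ n)"
        unfolding quot_def by (rule powser_quotient_coeff_le[OF C R _ _ _ K column]) (use h \<rho> in auto)
      then have "norm (quot h i) * R ^ nat \<bar>i\<bar> \<le> \<bar>h\<bar> * K * (\<Sum>\<^sub>\<infinity>n. norm (C n i) * \<rho>2 ^ n) * R ^ nat \<bar>i\<bar>"
        using R by (intro mult_right_mono) auto
      also have "\<dots> = (\<Sum>\<^sub>\<infinity>n. \<bar>h\<bar> * g (n, i))"
        unfolding g_def prod.case infsum_cmult_right' infsum_cmult_left' by (simp only: mult_ac)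
      finally show ?thesis .
    qed
    then have "(\<Sum>\<^sub>\<infinity>i. norm (quot h i) * R ^ nat \<bar>i\<bar>) \<le> (\<Sum>\<^sub>\<infinity>i. \<Sum>\<^sub>\<infinity>n. \<bar>h\<bar> * g (n, i))"
      using R by (intro infsum_le_infsum_columns[where g="\<lambda>x. \<bar>h\<bar> * g x"] summable_on_cmult_right g) auto
    then show ?thesis
      by (simp add: infsum_cmult_right')
  qed
  then have "\<forall>\<^sub>F h in at 0.
      (\<Sum>\<^sub>\<infinity>i. norm (quot h i) * R ^ nat \<bar>i\<bar>) \<le> \<bar>h\<bar> * (\<Sum>\<^sub>\<infinity>i. \<Sum>\<^sub>\<infinity>n. g (n, i))"
    unfolding eventually_at using \<rho> by (intro exI[of _ "\<rho>1 - \<bar>t\<bar>"]) auto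
  then show ?thesis
    unfolding quot_def by (rule that)
qed

lemma powser_eval_has_deriv:
  fixes C :: "nat \<Rightarrow> int \<Rightarrow> 'a::banach"
  assumes C: "powser_in_Lambda R d C" and R: "R \<ge> 1" and t: "\<bar>t\<bar> < d"
  shows "((\<lambda>h. \<Sum>\<^sub>\<infinity>i. norm ((1 / h) *\<^sub>R (powser_eval C (t + h) i - powser_eval C t i)
            - powser_eval (powser_deriv C) t i) * R ^ nat \<bar>i\<bar>) \<longlongrightarrow> 0) (at 0)"
proof -
  obtain S where upper: "\<forall>\<^sub>F h in at 0. (\<Sum>\<^sub>\<infinity>i. norm ((1 / h) *\<^sub>R (powser_eval C (t + h) i - powser_eval C t i)
      - powser_eval (powser_deriv C) t i) * R ^ nat \<bar>i\<bar>) \<le> \<bar>h\<bar> * S"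
    using powser_quotient_error_le[OF C R t] by blast
  have lower: "\<forall>\<^sub>F h in at 0. 0 \<le> (\<Sum>\<^sub>\<infinity>i. norm ((1 / h) *\<^sub>R (powser_eval C (t + h) i - powser_eval C t i)
      - powser_eval (powser_deriv C) t i) * R ^ nat \<bar>i\<bar>)"
    using R by (intro always_eventually allI infsum_nonneg) auto
  have "((\<lambda>h::real. \<bar>h\<bar> * S) \<longlongrightarrow> 0) (at 0)"
    by (rule tendsto_eq_intros refl)+ simp
  from tendsto_sandwich[OF lower upper tendsto_const this]
  show ?thesis .
qed

lemma powser_loop_smooth:
  fixes C :: "nat \<Rightarrow> int \<Rightarrow> mat2"
  assumes C: "powser_in_Lambda R d C" and R: "R \<ge> 1" and T: "T \<le> d"
  shows "loop_smooth_on R {-T<..<T} (powser_eval C)"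
  unfolding loop_smooth_on_def
proof (intro exI[of _ "\<lambda>k. powser_eval ((powser_deriv ^^ k) C)"] conjI ballI allI)
  fix k t
  assume "t \<in> {-T<..<T}"
  then have t: "\<bar>t\<bar> < d" using T by auto
  have Ck: "powser_in_Lambda R d ((powser_deriv ^^ k) C)"
    using powser_in_Lambda_deriv_iterate[OF C] R by simp
  show "in_Lambda R (powser_eval ((powser_deriv ^^ k) C) t)"
    unfolding in_Lambda_def by (rule powser_eval_weighted_summable[OF Ck R t])
  show "loop_has_deriv R (\<lambda>t. powser_eval ((powser_deriv ^^ k) C) t)
                         (\<lambda>t. powser_eval ((powser_deriv ^^ Suc k) C) t) t"
    unfolding loop_has_deriv_def rho_norm_def funpow.simps(2) o_apply
    by (rule powser_eval_has_deriv[OF Ck R t])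
qed simp

lemma summable_on_sum:
  fixes f :: "'i \<Rightarrow> 'a \<Rightarrow> 'b::topological_comm_monoid_add"
  assumes "finite I" "\<And>j. j \<in> I \<Longrightarrow> f j summable_on A"
  shows "(\<lambda>x. \<Sum>j\<in>I. f j x) summable_on A"
  using assms by (induction I rule: finite_induct) (auto intro: summable_on_add)

lemma powser_in_Lambda_vec:
  fixes C :: "nat \<Rightarrow> int \<Rightarrow> 'a::real_normed_vector^'n"
  assumes C: "\<And>j. powser_in_Lambda R d (\<lambda>n i. C n i $ j)" and R: "R \<ge> 0"
  shows "powser_in_Lambda R d C"
  unfolding powser_in_Lambda_def
proof (intro allI impI)
  fix \<rho> :: real
  assume \<rho>: "0 \<le> \<rho> \<and> \<rho> < d"
  have "(\<lambda>x. \<Sum>j\<in>UNIV. (\<lambda>(n, i). norm (C n i $ j) * R ^ nat \<bar>i\<bar> * \<rho> ^ n) x) summable_on UNIV"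
    using powser_in_LambdaD[OF C] \<rho> by (intro summable_on_sum) auto
  then show "(\<lambda>(n, i). norm (C n i) * R ^ nat \<bar>i\<bar> * \<rho> ^ n) summable_on UNIV"
  proof (rule summable_on_comparison_test, clarsimp)
    fix n i
    have "norm (C n i) * (R ^ nat \<bar>i\<bar> * \<rho> ^ n) \<le> (\<Sum>j\<in>UNIV. norm (C n i $ j)) * (R ^ nat \<bar>i\<bar> * \<rho> ^ n)"
      using R \<rho> by (intro mult_right_mono) (auto simp: norm_vec_def L2_set_le_sum)
    then show "norm (C n i) * R ^ nat \<bar>i\<bar> * \<rho> ^ n \<le> (\<Sum>j\<in>UNIV. norm (C n i $ j) * R ^ nat \<bar>i\<bar> * \<rho> ^ n)"
      by (simp add: sum_distrib_right mult.assoc)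
  qed (use R \<rho> in auto)
qed

lemma powser_in_Lambda_add:
  assumes "powser_in_Lambda R d C1" "powser_in_Lambda R d C2" "R \<ge> 0"
  shows "powser_in_Lambda R d (\<lambda>n i. C1 n i + C2 n i)"
  unfolding powser_in_Lambda_def
proof (intro allI impI)
  fix \<rho> :: real
  assume \<rho>: "0 \<le> \<rho> \<and> \<rho> < d"
  have "(\<lambda>x. (\<lambda>(n, i). norm (C1 n i) * R ^ nat \<bar>i\<bar> * \<rho> ^ n) x
           + (\<lambda>(n, i). norm (C2 n i) * R ^ nat \<bar>i\<bar> * \<rho> ^ n) x) summable_on UNIV"
    using powser_in_LambdaD[OF assms(1)] powser_in_LambdaD[OF assms(2)] \<rho>
    by (intro summable_on_add) auto
  then show "(\<lambda>(n, i). norm (C1 n i + C2 n i) * R ^ nat \<bar>i\<bar> * \<rho> ^ n) summable_on UNIV"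
  proof (rule summable_on_comparison_test, clarsimp)
    fix n i
    have "norm (C1 n i + C2 n i) * (R ^ nat \<bar>i\<bar> * \<rho> ^ n)
        \<le> (norm (C1 n i) + norm (C2 n i)) * (R ^ nat \<bar>i\<bar> * \<rho> ^ n)"
      using \<rho> assms(3) by (intro mult_right_mono norm_triangle_ineq) auto
    then show "norm (C1 n i + C2 n i) * R ^ nat \<bar>i\<bar> * \<rho> ^ n
        \<le> norm (C1 n i) * R ^ nat \<bar>i\<bar> * \<rho> ^ n + norm (C2 n i) * R ^ nat \<bar>i\<bar> * \<rho> ^ n"
      by (simp add: algebra_simps)
  qed (use \<rho> assms(3) in auto)
qed

lemma powser_eval_add:
  fixes C1 C2 :: "nat \<Rightarrow> int \<Rightarrow> 'a::banach"
  assumes "powser_in_Lambda R d C1" "powser_in_Lambda R d C2" "R \<ge> 1" "\<bar>t\<bar> < d"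
  shows "powser_eval (\<lambda>n i. C1 n i + C2 n i) t i = powser_eval C1 t i + powser_eval C2 t i"
  using has_sum_add[OF powser_eval_has_sum[OF assms(1,3,4)] powser_eval_has_sum[OF assms(2,3,4)]]
  unfolding powser_eval_def by (simp add: scaleR_add_right infsumI)

lemma powser_in_Lambda_mult_left:
  fixes C :: "nat \<Rightarrow> int \<Rightarrow> 'a::real_normed_div_algebra"
  assumes "powser_in_Lambda R d C"
  shows "powser_in_Lambda R d (\<lambda>n i. k * C n i)"
  unfolding powser_in_Lambda_def
proof (intro allI impI)
  fix \<rho> :: real
  assume "0 \<le> \<rho> \<and> \<rho> < d"
  then have "(\<lambda>x. norm k * (\<lambda>(n, i). norm (C n i) * R ^ nat \<bar>i\<bar> * \<rho> ^ n) x) summable_on UNIV"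
    using powser_in_LambdaD[OF assms] by (intro summable_on_cmult_right) auto
  then show "(\<lambda>(n, i). norm (k * C n i) * R ^ nat \<bar>i\<bar> * \<rho> ^ n) summable_on UNIV"
    by (simp add: norm_mult case_prod_unfold mult_ac)
qed

lemma powser_eval_mult_left:
  fixes C :: "nat \<Rightarrow> int \<Rightarrow> 'a::real_normed_div_algebra"
  shows "powser_eval (\<lambda>n i. k * C n i) t = (\<lambda>i. k * powser_eval C t i)"
  unfolding powser_eval_def mult_scaleR_right[symmetric] by (rule ext) (rule infsum_cmult_right')

lemma powser_eval_uminus: "powser_eval (\<lambda>n i. - C n i) t = (\<lambda>i. - powser_eval C t i)"
  unfolding powser_eval_def by (simp add: infsum_uminus)

lemma powser_eval_zero: "powser_eval (\<lambda>n i. 0) t = (\<lambda>i. 0)"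
  unfolding powser_eval_def by simp

lemma powser_in_Lambda_shift:
  assumes C: "powser_in_Lambda R d C" and R: "R \<ge> 1" and m: "\<bar>m\<bar> \<le> 1"
  shows "powser_in_Lambda R d (\<lambda>n i. C n (i + m))"
  unfolding powser_in_Lambda_def
proof (intro allI impI)
  fix \<rho> :: real
  assume \<rho>: "0 \<le> \<rho> \<and> \<rho> < d"
  define f where "f = (\<lambda>(n, i). norm (C n i) * R ^ nat \<bar>i\<bar> * \<rho> ^ n)"
  have "bij (\<lambda>(n, i). (n, i + m))"
    by (auto simp: bij_betw_def inj_def image_def intro!: exI[of _ "_ - m"])
  then have "(\<lambda>x. f ((\<lambda>(n, i). (n, i + m)) x)) summable_on UNIV"
    using powser_in_LambdaD[OF C] \<rho> unfolding f_def
    by (subst summable_on_reindex_bij_betw) auto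
  then have "(\<lambda>x. R * f ((\<lambda>(n, i). (n, i + m)) x)) summable_on UNIV"
    by (rule summable_on_cmult_right)
  then show "(\<lambda>(n, i). norm (C n (i + m)) * R ^ nat \<bar>i\<bar> * \<rho> ^ n) summable_on UNIV"
  proof (rule summable_on_comparison_test, clarsimp)
    fix n i
    have "R ^ nat \<bar>i\<bar> \<le> R ^ Suc (nat \<bar>i + m\<bar>)"
      using R m by (intro power_increasing) auto
    then have "norm (C n (i + m)) * R ^ nat \<bar>i\<bar> * \<rho> ^ n
        \<le> norm (C n (i + m)) * (R * R ^ nat \<bar>i + m\<bar>) * \<rho> ^ n"
      using \<rho> by (intro mult_right_mono mult_left_mono) auto
    then show "norm (C n (i + m)) * R ^ nat \<bar>i\<bar> * \<rho> ^ n \<le> R * f (n, i + m)"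
      unfolding f_def by (simp add: mult_ac)
  qed (use \<rho> R in auto)
qed

definition const_powser :: "'a::zero \<Rightarrow> nat \<Rightarrow> int \<Rightarrow> 'a" where
  "const_powser v n i = (if n = 0 \<and> i = 0 then v else 0)"

lemma powser_in_Lambda_const: "powser_in_Lambda R d (const_powser v)"
  unfolding powser_in_Lambda_def
proof (intro allI impI)
  fix \<rho> :: real
  have "{x. (\<lambda>(n, i). norm (const_powser v n i) * R ^ nat \<bar>i\<bar> * \<rho> ^ n) x \<noteq> 0} \<subseteq> {(0, 0)}"
    by (auto simp: const_powser_def split: if_splits)
  then show "(\<lambda>(n, i). norm (const_powser v n i) * R ^ nat \<bar>i\<bar> * \<rho> ^ n) summable_on UNIV"
    by (intro finite_nonzero_values_imp_summable_on) (auto intro: finite_subset)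
qed

lemma powser_eval_const: "powser_eval (const_powser v) t i = (if i = 0 then v else 0)"
proof -
  have "((\<lambda>n. t ^ n *\<^sub>R const_powser v n i) has_sum (if i = 0 then v else 0)) UNIV"
    by (rule has_sum_finite_neutralI[where B="{0}"]) (auto simp: const_powser_def)
  then show ?thesis
    unfolding powser_eval_def by (rule infsumI)
qed

lemma powser_in_Lambda_zero: "powser_in_Lambda R d (\<lambda>n i. 0)"
  unfolding powser_in_Lambda_def by (simp add: case_prod_unfold)

lemma powser_eval_bounded_linear:
  fixes C :: "nat \<Rightarrow> int \<Rightarrow> 'a::banach"
  assumes h: "bounded_linear h" and C: "powser_in_Lambda R d C" "R \<ge> 1" "\<bar>t\<bar> < d"
  shows "h (powser_eval C t i) = powser_eval (\<lambda>n i. h (C n i)) t i"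
proof -
  have "((\<lambda>n. h (t ^ n *\<^sub>R C n i)) has_sum h (powser_eval C t i)) UNIV"
    by (rule has_sum_bounded_linear[OF h powser_eval_has_sum[OF C]])
  then show ?thesis
    unfolding powser_eval_def by (simp add: infsumI linear_scale[OF bounded_linear.linear[OF h]])
qed

definition real_powser_times ::
    "(nat \<Rightarrow> real) \<Rightarrow> (nat \<Rightarrow> int \<Rightarrow> 'a::real_normed_vector) \<Rightarrow> nat \<Rightarrow> int \<Rightarrow> 'a" where
  "real_powser_times b C n i = (\<Sum>k\<le>n. b k *\<^sub>R C (n - k) i)"

lemma summable_on_cauchy_product_columns:
  fixes u :: "nat \<Rightarrow> real" and v :: "nat \<Rightarrow> 'a \<Rightarrow> real"
  assumes u: "summable u" "\<And>k. u k \<ge> 0"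
    and v: "(\<lambda>(m, i). v m i) summable_on UNIV" "\<And>m i. v m i \<ge> 0"
  shows "(\<lambda>(n, i). \<Sum>k\<le>n. u k * v (n - k) i) summable_on UNIV"
proof -
  define w where "w = (\<lambda>(n, i). \<Sum>k\<le>n. u k * v (n - k) i)"
  note v_columns = summable_on_pair_column[OF v(1)[unfolded case_prod_unfold]]
  have w_column: "((\<lambda>n. w (n, i)) has_sum (suminf u * (\<Sum>\<^sub>\<infinity>m. v m i))) UNIV" for i
  proof -
    have v_sums: "(\<lambda>m. v m i) sums (\<Sum>\<^sub>\<infinity>m. v m i)"
      using has_sum_imp_sums[OF has_sum_infsum[OF v_columns(1)[of i]]] by simp
    have "(\<lambda>n. \<Sum>k\<le>n. u k * v (n - k) i) sums (suminf u * suminf (\<lambda>m. v m i))"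
      by (rule Cauchy_product_sums) (use u v(2) sums_summable[OF v_sums] in simp_all)
    then show ?thesis
      unfolding w_def sums_unique[OF v_sums, symmetric] prod.case
      by (rule sums_nonneg_imp_has_sum) (simp add: sum_nonneg u v(2))
  qed
  have "(\<lambda>i. suminf u * (\<Sum>\<^sub>\<infinity>m. v m i)) summable_on UNIV"
    by (intro summable_on_cmult_right) (use v_columns(2) in simp)
  then have "(\<lambda>(i, n). w (n, i)) summable_on Sigma UNIV (\<lambda>_. UNIV)"
    by (rule summable_on_SigmaI[rotated])
      (use w_column in \<open>auto simp: w_def intro!: sum_nonneg mult_nonneg_nonneg u v(2)\<close>)
  then show ?thesis
    using summable_on_swap[of "\<lambda>(i, n). w (n, i)" UNIV UNIV] unfolding w_def by (simp add: case_prod_unfold)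
qed

lemma powser_in_Lambda_real_times:
  assumes b: "\<And>\<rho>. 0 \<le> \<rho> \<Longrightarrow> \<rho> < d \<Longrightarrow> summable (\<lambda>k. \<bar>b k\<bar> * \<rho> ^ k)"
    and C: "powser_in_Lambda R d C" and R: "R \<ge> 0"
  shows "powser_in_Lambda R d (real_powser_times b C)"
  unfolding powser_in_Lambda_def
proof (intro allI impI)
  fix \<rho> :: real
  assume \<rho>: "0 \<le> \<rho> \<and> \<rho> < d"
  define u where "u = (\<lambda>k. \<bar>b k\<bar> * \<rho> ^ k)"
  define v where "v = (\<lambda>m i. norm (C m i) * R ^ nat \<bar>i\<bar> * \<rho> ^ m)"
  have "(\<lambda>(n, i). \<Sum>k\<le>n. u k * v (n - k) i) summable_on UNIV"
    using b powser_in_LambdaD[OF C] R \<rho> unfolding u_def v_def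
    by (intro summable_on_cauchy_product_columns) auto
  then show "(\<lambda>(n, i). norm (real_powser_times b C n i) * R ^ nat \<bar>i\<bar> * \<rho> ^ n) summable_on UNIV"
  proof (rule summable_on_comparison_test, clarsimp)
    fix n i
    have "norm (real_powser_times b C n i) * (R ^ nat \<bar>i\<bar> * \<rho> ^ n)
        \<le> (\<Sum>k\<le>n. \<bar>b k\<bar> * norm (C (n - k) i)) * (R ^ nat \<bar>i\<bar> * \<rho> ^ n)"
      unfolding real_powser_times_def using R \<rho>
      by (intro mult_right_mono order_trans[OF norm_sum] sum_mono) auto
    also have "\<dots> = (\<Sum>k\<le>n. u k * v (n - k) i)"
      unfolding u_def v_def sum_distrib_right
    proof (intro sum.cong refl)
      fix k
      assume "k \<in> {..n}"
      then have "\<rho> ^ n = \<rho> ^ k * \<rho> ^ (n - k)"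
        by (simp flip: power_add)
      then show "\<bar>b k\<bar> * norm (C (n - k) i) * (R ^ nat \<bar>i\<bar> * \<rho> ^ n)
          = \<bar>b k\<bar> * \<rho> ^ k * (norm (C (n - k) i) * R ^ nat \<bar>i\<bar> * \<rho> ^ (n - k))"
        by (simp add: mult_ac)
    qed
    finally show "norm (real_powser_times b C n i) * R ^ nat \<bar>i\<bar> * \<rho> ^ n \<le> (\<Sum>k\<le>n. u k * v (n - k) i)"
      by (simp add: mult_ac)
  qed (use R \<rho> in auto)
qed

lemma powser_eval_real_times:
  fixes C :: "nat \<Rightarrow> int \<Rightarrow> complex"
  assumes b: "\<And>\<rho>. 0 \<le> \<rho> \<Longrightarrow> \<rho> < d \<Longrightarrow> summable (\<lambda>k. \<bar>b k\<bar> * \<rho> ^ k)"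
    and C: "powser_in_Lambda R d C" and R: "R \<ge> 1" and t: "\<bar>t\<bar> < d"
    and B: "(\<lambda>k. b k * t ^ k) sums B"
  shows "powser_eval (real_powser_times b C) t i = complex_of_real B * powser_eval C t i"
proof -
  define a where "a = (\<lambda>k. complex_of_real (b k * t ^ k))"
  define c where "c = (\<lambda>m. t ^ m *\<^sub>R C m i)"
  have "norm (a k) = \<bar>b k\<bar> * \<bar>t\<bar> ^ k" for k
    unfolding a_def norm_of_real by (simp add: abs_mult power_abs)
  then have "summable (\<lambda>k. norm (a k))"
    using b[of "\<bar>t\<bar>"] t by simp
  moreover have "summable (\<lambda>k. norm (c k))"
    unfolding c_def using powser_abs_summable[OF C R t] by (rule summable_on_imp_summable)
  ultimately have "(\<lambda>k. \<Sum>j\<le>k. a j * c (k - j)) sums (suminf a * suminf c)"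
    by (rule Cauchy_product_sums)
  moreover have "(\<Sum>j\<le>k. a j * c (k - j)) = t ^ k *\<^sub>R real_powser_times b C k i" for k
    unfolding a_def c_def real_powser_times_def scaleR_sum_right
  proof (intro sum.cong refl)
    fix j
    assume "j \<in> {..k}"
    then have "t ^ k = t ^ j * t ^ (k - j)"
      by (simp flip: power_add)
    then show "complex_of_real (b j * t ^ j) * (t ^ (k - j) *\<^sub>R C (k - j) i) = t ^ k *\<^sub>R b j *\<^sub>R C (k - j) i"
      by (simp add: scaleR_conv_of_real mult_ac)
  qed
  ultimately have product: "(\<lambda>k. t ^ k *\<^sub>R real_powser_times b C k i) sums (suminf a * suminf c)"
    by simp
  have "powser_in_Lambda R d (real_powser_times b C)"
    using powser_in_Lambda_real_times[OF b C] R by simp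
  from has_sum_imp_sums[OF powser_eval_has_sum[OF this R t]]
  have "powser_eval (real_powser_times b C) t i = suminf a * suminf c"
    using product by (rule sums_unique2)
  moreover have "suminf c = powser_eval C t i"
    unfolding c_def using powser_eval_has_sum[OF C R t] by (simp add: has_sum_imp_sums sums_unique[symmetric])
  moreover have "suminf a = complex_of_real B"
    unfolding a_def using B by (simp only: sums_of_real_iff sums_unique[symmetric])
  ultimately show ?thesis
    by simp
qed

section \<open>Evaluation on the unit circle\<close>

definition fourier_eval :: "(int \<Rightarrow> complex) \<Rightarrow> complex \<Rightarrow> complex" where
  "fourier_eval f z = (\<Sum>\<^sub>\<infinity>i. f i * z powi i)"

lemma loop_eval_powser_eval:
  fixes C :: "nat \<Rightarrow> int \<Rightarrow> mat2"
  assumes "powser_in_Lambda R d C" "R \<ge> 1" "\<bar>t\<bar> < d"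
  shows "loop_eval (powser_eval C t) z $ a $ b = fourier_eval (powser_eval (\<lambda>n i. C n i $ a $ b) t) z"
proof -
  have "bounded_linear (\<lambda>M::mat2. M $ a $ b)"
    by (rule bounded_linear_compose[OF bounded_linear_vec_nth bounded_linear_vec_nth])
  from powser_eval_bounded_linear[OF this assms]
  show ?thesis
    unfolding loop_eval_def fourier_eval_def by simp
qed

lemma fourier_eval_mult_left: "fourier_eval (\<lambda>i. k * f i) z = k * fourier_eval f z"
  unfolding fourier_eval_def by (simp add: mult.assoc infsum_cmult_right')

lemma fourier_eval_uminus: "fourier_eval (\<lambda>i. - f i) z = - fourier_eval f z"
  unfolding fourier_eval_def by (simp add: infsum_uminus)

lemma fourier_eval_zero: "fourier_eval (\<lambda>i. 0) z = 0"
  unfolding fourier_eval_def by simp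

lemma fourier_eval_shift:
  assumes "z \<noteq> 0"
  shows "fourier_eval (\<lambda>i. f (i + m)) z = z powi (- m) * fourier_eval f z"
proof -
  have "fourier_eval (\<lambda>i. f (i + m)) z = (\<Sum>\<^sub>\<infinity>j. f j * z powi (j - m))"
    unfolding fourier_eval_def
    by (rule infsum_reindex_bij_witness[where j="\<lambda>j. j + m" and i="\<lambda>j. j - m"]) auto
  also have "\<dots> = (\<Sum>\<^sub>\<infinity>j. z powi (- m) * (f j * z powi j))"
    using assms by (intro infsum_cong) (simp add: power_int_diff power_int_minus field_simps)
  also have "\<dots> = z powi (- m) * fourier_eval f z"
    unfolding fourier_eval_def by (rule infsum_cmult_right')
  finally show ?thesis .
qed

lemma finite_support_fourier_summable:
  fixes f :: "int \<Rightarrow> complex"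
  assumes "finite {i. f i \<noteq> 0}"
  shows "(\<lambda>i. f i * z powi i) summable_on UNIV"
proof (rule finite_nonzero_values_imp_summable_on)
  have "{i \<in> UNIV. f i * z powi i \<noteq> 0} \<subseteq> {i. f i \<noteq> 0}"
    by auto
  then show "finite {i \<in> UNIV. f i * z powi i \<noteq> 0}"
    using assms by (rule finite_subset)
qed

lemma fourier_eval_const_powser: "fourier_eval (powser_eval (const_powser v) t) z = v"
proof -
  have "((\<lambda>i. (if i = 0 then v else 0) * z powi i) has_sum v) UNIV"
    by (rule has_sum_finite_neutralI[where B="{0}"]) auto
  then show ?thesis
    unfolding fourier_eval_def powser_eval_const by (rule infsumI)
qed

context
  fixes R d :: real and C :: "nat \<Rightarrow> int \<Rightarrow> complex" and t :: real and z :: complex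
  assumes C: "powser_in_Lambda R d C" and R: "R \<ge> 1" and t: "\<bar>t\<bar> < d" and z: "cmod z = 1"
begin

lemma fourier_eval_powser_summable: "(\<lambda>i. powser_eval C t i * z powi i) summable_on UNIV"
proof -
  have "norm (powser_eval C t i * z powi i) \<le> norm (powser_eval C t i) * R ^ nat \<bar>i\<bar>" for i
  proof -
    have "norm (powser_eval C t i * z powi i) = norm (powser_eval C t i) * 1"
      using z by (simp add: norm_mult norm_power_int)
    also have "\<dots> \<le> norm (powser_eval C t i) * R ^ nat \<bar>i\<bar>"
      using R by (intro mult_left_mono) auto
    finally show ?thesis .
  qed
  then have "(\<lambda>i. norm (powser_eval C t i * z powi i)) summable_on UNIV"
    by (intro summable_on_comparison_test[OF powser_eval_weighted_summable[OF C R t]]) auto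
  then show ?thesis
    by (rule abs_summable_summable)
qed

lemma fourier_eval_powser: "fourier_eval (powser_eval C t) z = (\<Sum>\<^sub>\<infinity>n. t ^ n *\<^sub>R fourier_eval (C n) z)"
proof -
  define F where "F = (\<lambda>(n, i). t ^ n *\<^sub>R C n i * z powi i)"
  have bound: "norm (F x) \<le> (\<lambda>(n, i). norm (C n i) * R ^ nat \<bar>i\<bar> * \<bar>t\<bar> ^ n) x" for x
  proof (cases x)
    case (Pair n i)
    have "norm (F (n, i)) = norm (C n i) * 1 * \<bar>t\<bar> ^ n"
      using z unfolding F_def by (simp add: norm_mult norm_power_int power_abs)
    also have "\<dots> \<le> norm (C n i) * R ^ nat \<bar>i\<bar> * \<bar>t\<bar> ^ n"
      using R by (intro mult_right_mono mult_left_mono) auto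
    finally show ?thesis
      using Pair by simp
  qed
  have "(\<lambda>x. norm (F x)) summable_on UNIV"
    by (rule summable_on_comparison_test[OF powser_in_LambdaD[OF C, of "\<bar>t\<bar>"] bound]) (use t in auto)
  then have "(\<lambda>(n, i). F (n, i)) summable_on UNIV \<times> UNIV"
    by (simp add: abs_summable_summable[of F])
  note swap = infsum_swap_banach[OF this]
  have "fourier_eval (powser_eval C t) z = (\<Sum>\<^sub>\<infinity>i. \<Sum>\<^sub>\<infinity>n. F (n, i))"
    unfolding fourier_eval_def powser_eval_def F_def prod.case infsum_cmult_left'[symmetric] ..
  also have "\<dots> = (\<Sum>\<^sub>\<infinity>n. \<Sum>\<^sub>\<infinity>i. F (n, i))"
    by (rule swap[symmetric])
  also have "\<dots> = (\<Sum>\<^sub>\<infinity>n. t ^ n *\<^sub>R fourier_eval (C n) z)"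
    unfolding fourier_eval_def F_def prod.case scaleR_conv_of_real mult.assoc infsum_cmult_right' ..
  finally show ?thesis .
qed

end

lemma fourier_eval_powser_lincomb:
  assumes "powser_in_Lambda R d C1" "powser_in_Lambda R d C2" "R \<ge> 1" "\<bar>t\<bar> < d" "cmod z = 1"
  shows "fourier_eval (\<lambda>i. a * powser_eval C1 t i + b * powser_eval C2 t i) z
       = a * fourier_eval (powser_eval C1 t) z + b * fourier_eval (powser_eval C2 t) z"
proof -
  have "fourier_eval (\<lambda>i. a * powser_eval C1 t i + b * powser_eval C2 t i) z
      = (\<Sum>\<^sub>\<infinity>i. a * (powser_eval C1 t i * z powi i) + b * (powser_eval C2 t i * z powi i))"
    unfolding fourier_eval_def by (simp add: algebra_simps)
  also have "\<dots> = a * fourier_eval (powser_eval C1 t) z + b * fourier_eval (powser_eval C2 t) z"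
    unfolding fourier_eval_def
    using fourier_eval_powser_summable[OF assms(1,3,4,5)] fourier_eval_powser_summable[OF assms(2,3,4,5)]
    by (subst infsum_add) (auto intro!: summable_on_cmult_right simp: infsum_cmult_right')
  finally show ?thesis .
qed

section \<open>Binomial series with Laurent polynomial coefficients\<close>

fun laurent_power_coeffs :: "real \<Rightarrow> nat \<Rightarrow> int \<Rightarrow> complex" where
  "laurent_power_coeffs c 0 i = (if i = 0 then 1 else 0)"
| "laurent_power_coeffs c (Suc n) i = laurent_power_coeffs c n (i - 1) + laurent_power_coeffs c n (i + 1)
     - 2 * complex_of_real c * laurent_power_coeffs c n i"

lemma laurent_power_coeffs_eq_0: "int n < \<bar>i\<bar> \<Longrightarrow> laurent_power_coeffs c n i = 0"
  by (induction n arbitrary: i) auto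

lemma finite_laurent_power_coeffs: "finite {i. laurent_power_coeffs c n (i + m) \<noteq> 0}"
proof (rule finite_subset)
  show "{i. laurent_power_coeffs c n (i + m) \<noteq> 0} \<subseteq> {-int n - m..int n - m}"
    using laurent_power_coeffs_eq_0[of n _ c] by force
qed simp

lemma norm_laurent_power_coeffs_le: "norm (laurent_power_coeffs c n i) \<le> (2 + 2 * \<bar>c\<bar>) ^ n"
proof (induction n arbitrary: i)
  case (Suc n)
  have "norm (laurent_power_coeffs c (Suc n) i)
      \<le> norm (laurent_power_coeffs c n (i - 1)) + norm (laurent_power_coeffs c n (i + 1))
        + 2 * \<bar>c\<bar> * norm (laurent_power_coeffs c n i)"
    by (simp add: norm_mult order_trans[OF norm_triangle_ineq4] add_mono norm_triangle_ineq)
  also have "\<dots> \<le> (2 + 2 * \<bar>c\<bar>) ^ n + (2 + 2 * \<bar>c\<bar>) ^ n + 2 * \<bar>c\<bar> * (2 + 2 * \<bar>c\<bar>) ^ n"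
    using Suc.IH by (intro add_mono mult_left_mono) auto
  also have "\<dots> = (2 + 2 * \<bar>c\<bar>) ^ Suc n"
    by (simp add: algebra_simps)
  finally show ?case .
qed simp

lemma fourier_eval_laurent_power:
  assumes "z \<noteq> 0"
  shows "fourier_eval (laurent_power_coeffs c n) z = (z + inverse z - 2 * complex_of_real c) ^ n"
proof (induction n)
  case 0
  have "((\<lambda>i. laurent_power_coeffs c 0 i * z powi i) has_sum 1) UNIV"
    by (rule has_sum_finite_neutralI[where B="{0}"]) auto
  then show ?case
    unfolding fourier_eval_def by (simp add: infsumI)
next
  case (Suc n)
  let ?P = "laurent_power_coeffs c n"
  have summable: "(\<lambda>i. ?P (i + m) * z powi i) summable_on UNIV" for m
    by (rule finite_support_fourier_summable[OF finite_laurent_power_coeffs])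
  have "((\<lambda>i. ?P (i + - 1) * z powi i + ?P (i + 1) * z powi i - 2 * complex_of_real c * (?P i * z powi i))
      has_sum (fourier_eval (\<lambda>i. ?P (i + - 1)) z + fourier_eval (\<lambda>i. ?P (i + 1)) z
               - 2 * complex_of_real c * fourier_eval ?P z)) UNIV"
    unfolding fourier_eval_def
    by (intro has_sum_diff has_sum_add has_sum_cmult_right has_sum_infsum summable summable[of 0, simplified])
  then have "((\<lambda>i. laurent_power_coeffs c (Suc n) i * z powi i)
      has_sum (z + inverse z - 2 * complex_of_real c) * fourier_eval ?P z) UNIV"
    using fourier_eval_shift[OF assms, of ?P "- 1"] fourier_eval_shift[OF assms, of ?P 1]
    by (simp add: power_int_minus algebra_simps)
  then show ?case
    unfolding fourier_eval_def[of "laurent_power_coeffs c (Suc n)"] Suc.IH by (simp add: infsumI)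
qed

lemma summable_abs_gchoose_power:
  fixes X :: real
  assumes X: "0 \<le> X" "X < 1"
  shows "summable (\<lambda>n. \<bar>e gchoose n\<bar> * X ^ n)"
    and "summable (\<lambda>n. real (2 * n + 1) * \<bar>e gchoose n\<bar> * X ^ n)"
proof -
  define X1 where "X1 = (X + 1) / 2"
  define X2 where "X2 = (X1 + 1) / 2"
  have X12: "X < X1" "X1 < X2" "X2 < 1" "0 < X1"
    using X unfolding X1_def X2_def by auto
  have "summable (\<lambda>n. (e gchoose n) * X2 ^ n)"
    using gen_binomial_real[of X2 e] X12 by (auto simp: sums_iff)
  then have "summable (\<lambda>n. norm ((e gchoose n) * X1 ^ n))"
    by (rule powser_insidea) (use X12 in auto)
  then have X1_summable: "summable (\<lambda>n. \<bar>e gchoose n\<bar> * X1 ^ n)"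
    using X12 by (simp add: abs_mult power_abs)
  show "summable (\<lambda>n. \<bar>e gchoose n\<bar> * X ^ n)"
    by (rule summable_comparison_test[OF _ X1_summable])
      (use X X12 in \<open>auto intro!: exI[of _ 0] mult_left_mono power_mono simp: abs_mult power_abs\<close>)
  obtain K where K: "\<And>n. real n * X ^ n \<le> K * X1 ^ n"
    using linear_times_power_bounded[of X X1] X X12 by auto
  show "summable (\<lambda>n. real (2 * n + 1) * \<bar>e gchoose n\<bar> * X ^ n)"
  proof (rule summable_comparison_test[OF _ summable_mult[OF X1_summable, of "2 * K + 1"]], intro exI[of _ 0] allI impI)
    fix n :: nat
    have "real (2 * n + 1) * X ^ n = 2 * (real n * X ^ n) + X ^ n"
      by (simp add: algebra_simps)
    also have "\<dots> \<le> (2 * K + 1) * X1 ^ n"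
      using K[of n] X X12 power_mono[of X X1 n] by (simp add: algebra_simps)
    finally have "\<bar>e gchoose n\<bar> * (real (2 * n + 1) * X ^ n) \<le> \<bar>e gchoose n\<bar> * ((2 * K + 1) * X1 ^ n)"
      by (rule mult_left_mono) simp
    then show "norm (real (2 * n + 1) * \<bar>e gchoose n\<bar> * X ^ n) \<le> (2 * K + 1) * (\<bar>e gchoose n\<bar> * X1 ^ n)"
      using X by (simp add: abs_mult mult_ac)
  qed
qed

text \<open>The coefficients of \<open>(1 + \<kappa> t (\<lambda> + \<lambda>\<^sup>-\<^sup>1 - 2c))\<^sup>e\<close>; those of \<open>(\<lambda> + \<lambda>\<^sup>-\<^sup>1 - 2c)\<^sup>n\<close> are
  \<open>laurent_power_coeffs c n\<close>.\<close>

definition binomial_powser :: "real \<Rightarrow> real \<Rightarrow> real \<Rightarrow> nat \<Rightarrow> int \<Rightarrow> complex" where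
  "binomial_powser e \<kappa> c n i = complex_of_real ((e gchoose n) * \<kappa> ^ n) * laurent_power_coeffs c n i"

lemma powser_in_Lambda_binomial:
  assumes small: "d * \<bar>\<kappa>\<bar> * (2 + 2 * \<bar>c\<bar>) * R < 1" and R: "R \<ge> 1"
  shows "powser_in_Lambda R d (binomial_powser e \<kappa> c)"
  unfolding powser_in_Lambda_def
proof (intro allI impI)
  fix \<rho> :: real
  assume \<rho>: "0 \<le> \<rho> \<and> \<rho> < d"
  define X where "X = \<rho> * \<bar>\<kappa>\<bar> * (2 + 2 * \<bar>c\<bar>) * R"
  have X: "0 \<le> X" "X < 1"
    unfolding X_def using \<rho> R by (auto intro!: le_less_trans[OF _ small] mult_right_mono)
  define f where "f = (\<lambda>(n, i). norm (binomial_powser e \<kappa> c n i) * R ^ nat \<bar>i\<bar> * \<rho> ^ n)"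
  define g where "g = (\<lambda>n. \<Sum>i\<in>{-int n..int n}. f (n, i))"
  have f_nonneg: "f x \<ge> 0" for x
    unfolding f_def using \<rho> R by (auto simp: case_prod_unfold)
  have row: "((\<lambda>i. f (n, i)) has_sum g n) UNIV" for n
    unfolding g_def
    by (rule has_sum_finite_neutralI) (auto simp: f_def binomial_powser_def laurent_power_coeffs_eq_0)
  have "f (n, i) \<le> \<bar>e gchoose n\<bar> * X ^ n" if "i \<in> {-int n..int n}" for n i
  proof -
    have "f (n, i) = \<bar>e gchoose n\<bar> * \<bar>\<kappa>\<bar> ^ n * norm (laurent_power_coeffs c n i) * R ^ nat \<bar>i\<bar> * \<rho> ^ n"
      unfolding f_def binomial_powser_def by (simp add: norm_mult norm_power abs_mult power_abs)
    also have "\<dots> \<le> \<bar>e gchoose n\<bar> * \<bar>\<kappa>\<bar> ^ n * (2 + 2 * \<bar>c\<bar>) ^ n * R ^ n * \<rho> ^ n"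
      using that R \<rho> norm_laurent_power_coeffs_le[of c n i]
      by (intro mult_right_mono mult_left_mono mult_mono power_increasing) auto
    also have "\<dots> = \<bar>e gchoose n\<bar> * X ^ n"
      unfolding X_def by (simp add: power_mult_distrib)
    finally show ?thesis .
  qed
  then have "g n \<le> real (2 * n + 1) * \<bar>e gchoose n\<bar> * X ^ n" for n
    unfolding g_def using sum_mono[of "{-int n..int n}" "\<lambda>i. f (n, i)" "\<lambda>_. \<bar>e gchoose n\<bar> * X ^ n"]
    by (simp add: ac_simps)
  moreover have "g n \<ge> 0" for n
    unfolding g_def by (intro sum_nonneg f_nonneg)
  ultimately have "summable g"
    by (intro summable_comparison_test[OF _ summable_abs_gchoose_power(2)[OF X, of e]]) auto
  then have "g summable_on UNIV"
    using \<open>\<And>n. g n \<ge> 0\<close> by (rule summable_nonneg_imp_summable_on)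
  then have "f summable_on Sigma UNIV (\<lambda>_. UNIV)"
    by (rule summable_on_SigmaI[rotated]) (use row f_nonneg in auto)
  then show "(\<lambda>(n, i). norm (binomial_powser e \<kappa> c n i) * R ^ nat \<bar>i\<bar> * \<rho> ^ n) summable_on UNIV"
    unfolding f_def by simp
qed

lemma fourier_eval_binomial_powser:
  assumes small: "d * \<bar>\<kappa>\<bar> * (2 + 2 * \<bar>c\<bar>) * R < 1" and R: "R \<ge> 1"
    and t: "\<bar>t\<bar> < d" and z: "cmod z = 1"
  shows "fourier_eval (powser_eval (binomial_powser e \<kappa> c) t) z
      = complex_of_real ((1 + \<kappa> * t * (2 * Re z - 2 * c)) powr e)"
    and "\<bar>\<kappa> * t * (2 * Re z - 2 * c)\<bar> < 1"
proof -
  define y where "y = \<kappa> * t * (2 * Re z - 2 * c)"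
  have "z * cnj z = 1"
    using complex_norm_square[of z] z by simp
  then have "inverse z = cnj z"
    by (rule inverse_unique)
  then have laurent: "z + inverse z - 2 * complex_of_real c = complex_of_real (2 * Re z - 2 * c)"
    by (simp add: complex_add_cnj)
  have "\<bar>2 * Re z - 2 * c\<bar> \<le> (2 + 2 * \<bar>c\<bar>) * R"
    using abs_Re_le_cmod[of z] z R by (smt (verit) mult_le_cancel_left1)
  then have "\<bar>y\<bar> \<le> \<bar>\<kappa>\<bar> * (d * ((2 + 2 * \<bar>c\<bar>) * R))"
    unfolding y_def abs_mult mult.assoc using t by (intro mult_left_mono mult_mono) auto
  with small show y: "\<bar>\<kappa> * t * (2 * Re z - 2 * c)\<bar> < 1"
    unfolding y_def by (simp add: mult_ac)
  have z0: "z \<noteq> 0"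
    using z by auto
  have "t ^ n *\<^sub>R fourier_eval (binomial_powser e \<kappa> c n) z = complex_of_real ((e gchoose n) * y ^ n)" for n
    unfolding binomial_powser_def fourier_eval_mult_left fourier_eval_laurent_power[OF z0] laurent y_def
    by (simp add: scaleR_conv_of_real power_mult_distrib mult_ac)
  then have "fourier_eval (powser_eval (binomial_powser e \<kappa> c) t) z = (\<Sum>\<^sub>\<infinity>n. complex_of_real ((e gchoose n) * y ^ n))"
    using fourier_eval_powser[OF powser_in_Lambda_binomial[OF small R] R t z] by simp
  also have "\<dots> = complex_of_real ((1 + y) powr e)"
  proof (rule infsumI, rule norm_summable_imp_has_sum)
    have "\<bar>y\<bar> < 1"
      using y unfolding y_def .
    then show "summable (\<lambda>n. norm (complex_of_real ((e gchoose n) * y ^ n)))"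
      unfolding norm_of_real abs_mult power_abs using summable_abs_gchoose_power(1)[of "\<bar>y\<bar>" e] by simp
    show "(\<lambda>n. complex_of_real ((e gchoose n) * y ^ n)) sums complex_of_real ((1 + y) powr e)"
      using gen_binomial_real[OF \<open>\<bar>y\<bar> < 1\<close>, of e] by (simp only: sums_of_real_iff)
  qed
  finally show "fourier_eval (powser_eval (binomial_powser e \<kappa> c) t) z
      = complex_of_real ((1 + \<kappa> * t * (2 * Re z - 2 * c)) powr e)"
    unfolding y_def .
qed

section \<open>Diagonalising \<open>[[0, w\<^sup>*], [w, 0]]\<close>\<close>

lemma matrix_inv_eqI:
  fixes A B :: "'a::comm_ring_1^'n^'n"
  assumes "A ** B = mat 1" "B ** A = mat 1"
  shows "matrix_inv A = B"
proof -
  have "A ** matrix_inv A = mat 1 \<and> matrix_inv A ** A = mat 1"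
    unfolding matrix_inv_def using assms by (intro someI_ex[of "\<lambda>A'. A ** A' = mat 1 \<and> A' ** A = mat 1"]) blast
  then have "matrix_inv A = matrix_inv A ** (A ** B)"
    using assms by (simp add: matrix_mul_rid)
  also have "\<dots> = B"
    using \<open>A ** matrix_inv A = mat 1 \<and> matrix_inv A ** A = mat 1\<close>
    by (simp add: matrix_mul_assoc matrix_mul_lid)
  finally show ?thesis .
qed

definition offdiag :: "complex \<Rightarrow> mat2" where
  "offdiag w = (\<chi> a b. if a = 1 \<and> b = 2 then cnj w else if a = 2 \<and> b = 1 then w else 0)"

definition diag_pm :: "real \<Rightarrow> mat2" where
  "diag_pm \<mu> = (\<chi> a b. if a \<noteq> b then 0 else if a = 1 then complex_of_real \<mu> else - complex_of_real \<mu>)"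

definition offdiag_diagonalizer :: "complex \<Rightarrow> real \<Rightarrow> mat2" where
  "offdiag_diagonalizer w \<mu> = (\<chi> a b. complex_of_real (1 / sqrt 2) *
     (if a = b then - 1 else if a = 1 then cnj w / complex_of_real \<mu> else - w / complex_of_real \<mu>))"

lemma offdiag_diagonalization:
  assumes \<mu>: "\<mu> > 0" and w: "w * cnj w = complex_of_real (\<mu>\<^sup>2)"
  shows "offdiag_diagonalizer w \<mu> \<in> SU2"
    and "(\<chi> a b. \<i> * diag_pm \<mu> $ a $ b) \<in> su2"
    and "is_diagonal (diag_pm \<mu>)"
    and "offdiag_diagonalizer w \<mu> ** diag_pm \<mu> ** matrix_inv (offdiag_diagonalizer w \<mu>) = offdiag w"
proof -
  define H where "H = offdiag_diagonalizer w \<mu>"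
  define k where "k = complex_of_real (1 / sqrt 2)"
  define m where "m = complex_of_real \<mu>"
  have k: "k * k = 1 / 2"
    unfolding k_def by (simp flip: of_real_mult)
  have m: "m \<noteq> 0" "w * cnj w = m * m"
    using \<mu> w unfolding m_def by (simp_all add: power2_eq_square)
  have H: "H $ 1 $ 1 = - k" "H $ 1 $ 2 = k * cnj w / m" "H $ 2 $ 1 = - (k * w / m)" "H $ 2 $ 2 = - k"
    unfolding H_def offdiag_diagonalizer_def k_def m_def by simp_all
  have adj: "adjoint2 H = (\<chi> a b. if a = b then - k else if a = 1 then - (k * cnj w / m) else k * w / m)"
    unfolding adjoint2_def using H by (simp add: vec_eq_iff forall_2 k_def m_def)
  have unitary: "H ** adjoint2 H = mat 1" "adjoint2 H ** H = mat 1"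
    unfolding adj matrix_matrix_mult_def mat_def using k m
    by (simp_all add: vec_eq_iff forall_2 sum_2 H field_simps)
  have "det H = 1"
    unfolding det_2 H using k m by (simp add: field_simps)
  with unitary show "H \<in> SU2"
    unfolding SU2_def H_def by simp
  show "(\<chi> a b. \<i> * diag_pm \<mu> $ a $ b) \<in> su2"
    unfolding su2_def adjoint2_def diag_pm_def by (simp add: vec_eq_iff forall_2 sum_2 trace_def)
  show "is_diagonal (diag_pm \<mu>)"
    unfolding is_diagonal_def diag_pm_def by simp
  have "matrix_inv H = adjoint2 H"
    by (rule matrix_inv_eqI[OF unitary])
  then show "H ** diag_pm \<mu> ** matrix_inv H = offdiag w"
    unfolding offdiag_def diag_pm_def adj matrix_matrix_mult_def using k m
    by (simp add: vec_eq_iff forall_2 sum_2 H m_def[symmetric] field_simps) algebra+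
qed

section \<open>The Delaunay residue\<close>

text \<open>\<open>r = delaunay_rs q \<sigma> t\<close> and \<open>s = delaunay_rs q (-\<sigma>) t\<close> solve the residue equations, because
  these are equivalent to \<open>(r + s)\<^sup>2 = (1 + 2 (1 - cosh q) t / sinh q) / 4\<close> and
  \<open>(r - s)\<^sup>2 = (1 - 2 (1 + cosh q) t / sinh q) / 4\<close>; the sign \<open>\<sigma>\<close> of \<open>r - s\<close> distinguishes the
  spherical from the catenoidal family.\<close>

definition delaunay_rs :: "real \<Rightarrow> real \<Rightarrow> real \<Rightarrow> real" where
  "delaunay_rs q \<epsilon> t = (sqrt (1 + 2 * (1 - cosh q) / sinh q * t) + \<epsilon> * sqrt (1 - 2 * (1 + cosh q) / sinh q * t)) / 4"

lemma delaunay_rs_eqI: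
  fixes r s t :: real
  assumes q: "0 < q" and eq1: "r\<^sup>2 + s\<^sup>2 + 2 * r * s * cosh q = 1/4" and eq2: "4 * r * s * sinh q = t"
    and pos: "r + s > 0" and \<sigma>: "\<bar>\<sigma>\<bar> = 1" and sign: "\<sigma> * (r - s) > 0"
  shows "r = delaunay_rs q \<sigma> t" and "s = delaunay_rs q (- \<sigma>) t"
proof -
  have sh: "sinh q > 0"
    using q by simp
  have tb: "2 * (1 - cosh q) / sinh q * t = 8 * r * s * (1 - cosh q)"
    and tg: "2 * (1 + cosh q) / sinh q * t = 8 * r * s * (1 + cosh q)"
    using sh unfolding eq2[symmetric] by (simp_all add: field_simps)
  have eq1': "4 * r\<^sup>2 + 4 * s\<^sup>2 + 8 * r * s * cosh q = 1"
    using eq1 by simp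
  have "1 + 2 * (1 - cosh q) / sinh q * t = (2 * (r + s))\<^sup>2"
    using eq1' unfolding tb by (simp add: power2_eq_square algebra_simps)
  then have plus: "sqrt (1 + 2 * (1 - cosh q) / sinh q * t) = 2 * (r + s)"
    using pos by simp
  have "1 - 2 * (1 + cosh q) / sinh q * t = (2 * (r - s))\<^sup>2"
    using eq1' unfolding tg by (simp add: power2_eq_square algebra_simps)
  moreover have "\<sigma> = 1 \<or> \<sigma> = - 1"
    using \<sigma> by linarith
  then have "\<bar>r - s\<bar> = \<sigma> * (r - s)"
    using sign by auto
  ultimately have minus: "sqrt (1 - 2 * (1 + cosh q) / sinh q * t) = 2 * \<sigma> * (r - s)"
    by simp
  show "r = delaunay_rs q \<sigma> t" and "s = delaunay_rs q (- \<sigma>) t"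
    unfolding delaunay_rs_def plus minus using \<open>\<sigma> = 1 \<or> \<sigma> = - 1\<close> by (auto simp: algebra_simps)
qed

definition delaunay_rs_coeff :: "real \<Rightarrow> real \<Rightarrow> nat \<Rightarrow> real" where
  "delaunay_rs_coeff q \<epsilon> k = ((1/2) gchoose k) *
     ((2 * (1 - cosh q) / sinh q) ^ k + \<epsilon> * (- 2 * (1 + cosh q) / sinh q) ^ k) / 4"

lemma delaunay_rs_coeff_sums:
  assumes "\<bar>2 * (1 - cosh q) / sinh q * t\<bar> < 1" "\<bar>- 2 * (1 + cosh q) / sinh q * t\<bar> < 1"
  shows "(\<lambda>k. delaunay_rs_coeff q \<epsilon> k * t ^ k) sums delaunay_rs q \<epsilon> t"
proof -
  have "0 \<le> 1 + 2 * (1 - cosh q) / sinh q * t" "0 \<le> 1 + - 2 * (1 + cosh q) / sinh q * t"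
    using assms by linarith+
  note sqrt_eq = powr_half_sqrt[OF this(1)] powr_half_sqrt[OF this(2)]
  have "(\<lambda>k. ((1/2) gchoose k) * (2 * (1 - cosh q) / sinh q * t) ^ k) sums sqrt (1 + 2 * (1 - cosh q) / sinh q * t)"
    using gen_binomial_real[OF assms(1), of "1/2"] unfolding sqrt_eq .
  moreover have "(\<lambda>k. ((1/2) gchoose k) * (- 2 * (1 + cosh q) / sinh q * t) ^ k) sums sqrt (1 - 2 * (1 + cosh q) / sinh q * t)"
  proof -
    have "1 + - 2 * (1 + cosh q) / sinh q * t = 1 - 2 * (1 + cosh q) / sinh q * t"
      by (simp add: field_split_simps)
    then show ?thesis
      using gen_binomial_real[OF assms(2), of "1/2"] unfolding sqrt_eq by simp
  qed
  ultimately have "(\<lambda>k. (((1/2) gchoose k) * (2 * (1 - cosh q) / sinh q * t) ^ k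
      + \<epsilon> * (((1/2) gchoose k) * (- 2 * (1 + cosh q) / sinh q * t) ^ k)) / 4) sums delaunay_rs q \<epsilon> t"
    unfolding delaunay_rs_def by (intro sums_divide sums_add sums_mult)
  then show ?thesis
    unfolding power_mult_distrib delaunay_rs_coeff_def by (simp add: algebra_simps)
qed

lemma summable_delaunay_rs_coeff:
  assumes "0 \<le> \<rho>" "\<bar>2 * (1 - cosh q) / sinh q\<bar> * \<rho> < 1" "\<bar>- 2 * (1 + cosh q) / sinh q\<bar> * \<rho> < 1"
    and "\<bar>\<epsilon>\<bar> = 1"
  shows "summable (\<lambda>k. \<bar>delaunay_rs_coeff q \<epsilon> k\<bar> * \<rho> ^ k)"
proof (rule summable_comparison_test)
  let ?\<beta> = "2 * (1 - cosh q) / sinh q" and ?\<gamma> = "- 2 * (1 + cosh q) / sinh q"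
  show "summable (\<lambda>k. (\<bar>(1/2) gchoose k\<bar> * (\<bar>?\<beta>\<bar> * \<rho>) ^ k + \<bar>(1/2) gchoose k\<bar> * (\<bar>?\<gamma>\<bar> * \<rho>) ^ k) / 4)"
    using assms by (intro summable_divide summable_add summable_abs_gchoose_power(1)) auto
  have "\<bar>delaunay_rs_coeff q \<epsilon> k\<bar> \<le> \<bar>(1/2) gchoose k\<bar> * (\<bar>?\<beta>\<bar> ^ k + \<bar>?\<gamma>\<bar> ^ k) / 4" for k
    unfolding delaunay_rs_coeff_def using assms(4)
    by (simp add: abs_mult power_abs mult_left_mono abs_triangle_ineq[THEN order_trans])
  then show "\<exists>N. \<forall>k\<ge>N. norm (\<bar>delaunay_rs_coeff q \<epsilon> k\<bar> * \<rho> ^ k)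
      \<le> (\<bar>(1/2) gchoose k\<bar> * (\<bar>?\<beta>\<bar> * \<rho>) ^ k + \<bar>(1/2) gchoose k\<bar> * (\<bar>?\<gamma>\<bar> * \<rho>) ^ k) / 4"
  proof (intro exI[of _ 0] allI impI)
    fix k
    have "norm (\<bar>delaunay_rs_coeff q \<epsilon> k\<bar> * \<rho> ^ k) = \<bar>delaunay_rs_coeff q \<epsilon> k\<bar> * \<rho> ^ k"
      using assms(1) by simp
    also have "\<dots> \<le> \<bar>(1/2) gchoose k\<bar> * (\<bar>?\<beta>\<bar> ^ k + \<bar>?\<gamma>\<bar> ^ k) / 4 * \<rho> ^ k"
      using assms(1) \<open>\<And>k. \<bar>delaunay_rs_coeff q \<epsilon> k\<bar> \<le> _\<close> by (intro mult_right_mono) auto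
    also have "\<dots> = (\<bar>(1/2) gchoose k\<bar> * (\<bar>?\<beta>\<bar> * \<rho>) ^ k + \<bar>(1/2) gchoose k\<bar> * (\<bar>?\<gamma>\<bar> * \<rho>) ^ k) / 4"
      by (simp add: power_mult_distrib power_divide algebra_simps)
    finally show "norm (\<bar>delaunay_rs_coeff q \<epsilon> k\<bar> * \<rho> ^ k)
      \<le> (\<bar>(1/2) gchoose k\<bar> * (\<bar>?\<beta>\<bar> * \<rho>) ^ k + \<bar>(1/2) gchoose k\<bar> * (\<bar>?\<gamma>\<bar> * \<rho>) ^ k) / 4" .
  qed
qed

definition delaunay_radius :: "real \<Rightarrow> real \<Rightarrow> real" where
  "delaunay_radius q R = sinh q / (sinh q + (2 + 2 * cosh q) * R + 4 * cosh q)"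

lemma delaunay_radius_bounds:
  assumes q: "0 < q" and R: "1 \<le> R"
  shows "0 < delaunay_radius q R"
    and "delaunay_radius q R * \<bar>1 / sinh q\<bar> * (2 + 2 * \<bar>cosh q\<bar>) * R < 1"
    and "\<bar>2 * (1 - cosh q) / sinh q\<bar> * delaunay_radius q R < 1"
    and "\<bar>- 2 * (1 + cosh q) / sinh q\<bar> * delaunay_radius q R < 1"
proof -
  have sh: "sinh q > 0" and c: "cosh q \<ge> 1"
    using q cosh_real_ge_1 by auto
  moreover have R_bound: "2 + 2 * cosh q \<le> (2 + 2 * cosh q) * R"
    using R c by simp
  ultimately have den: "sinh q + (2 + 2 * cosh q) * R + 4 * cosh q > 0"
    and bound: "\<And>X. X \<le> (2 + 2 * cosh q) * R + 4 * cosh q \<Longrightarrow> X < sinh q + (2 + 2 * cosh q) * R + 4 * cosh q"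
    by linarith+
  show "0 < delaunay_radius q R"
    unfolding delaunay_radius_def by (rule divide_pos_pos[OF sh den])
  have less: "X * delaunay_radius q R < 1" if "X * sinh q \<le> (2 + 2 * cosh q) * R + 4 * cosh q" for X
  proof -
    have "X * delaunay_radius q R = X * sinh q / (sinh q + (2 + 2 * cosh q) * R + 4 * cosh q)"
      unfolding delaunay_radius_def by simp
    also have "\<dots> < 1"
      using bound[OF that] den by (simp add: divide_less_eq)
    finally show ?thesis .
  qed
  have "\<bar>1 / sinh q\<bar> * (2 + 2 * \<bar>cosh q\<bar>) * R * sinh q = (2 + 2 * cosh q) * R"
    using sh c by simp
  then have "\<bar>1 / sinh q\<bar> * (2 + 2 * \<bar>cosh q\<bar>) * R * delaunay_radius q R < 1"
    using c by (intro less) simp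
  then show "delaunay_radius q R * \<bar>1 / sinh q\<bar> * (2 + 2 * \<bar>cosh q\<bar>) * R < 1"
    by (simp add: ac_simps)
  have "2 * (1 - cosh q) / sinh q \<le> 0"
    using sh c by (simp add: divide_nonpos_pos)
  then have "\<bar>2 * (1 - cosh q) / sinh q\<bar> * sinh q = 2 * cosh q - 2"
    using sh c by (simp add: abs_of_nonpos[of "2 * (1 - cosh q) / sinh q"])
  then show "\<bar>2 * (1 - cosh q) / sinh q\<bar> * delaunay_radius q R < 1"
    using c R_bound by (intro less) linarith
  have "- 2 * (1 + cosh q) / sinh q < 0"
    using sh c by (simp add: divide_neg_pos)
  then have "\<bar>- 2 * (1 + cosh q) / sinh q\<bar> * sinh q = 2 + 2 * cosh q"
    using sh c by (simp add: abs_of_neg[of "- 2 * (1 + cosh q) / sinh q"])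
  then show "\<bar>- 2 * (1 + cosh q) / sinh q\<bar> * delaunay_radius q R < 1"
    using c R_bound by (intro less) linarith
qed

lemma inverse_unit_complex: "cmod z = 1 \<Longrightarrow> inverse z = cnj z"
  by (rule inverse_unique) (simp add: complex_norm_square[symmetric])

lemma A_rs_eq_offdiag: "cmod z = 1 \<Longrightarrow> A_rs r s z = offdiag (complex_of_real r * z + complex_of_real s)"
  unfolding A_rs_def offdiag_def by (simp add: vec_eq_iff forall_2 inverse_unit_complex)

lemma delaunay_offdiag_norm:
  assumes e1: "r\<^sup>2 + s\<^sup>2 + 2 * r * s * cosh q = 1/4" and e2: "4 * r * s * sinh q = t"
    and q: "0 < q" and z: "cmod z = 1"
  shows "(complex_of_real r * z + complex_of_real s) * cnj (complex_of_real r * z + complex_of_real s)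
    = complex_of_real ((1 + 1 / sinh q * t * (2 * Re z - 2 * cosh q)) / 4)"
proof -
  have "1 / sinh q * t = 4 * r * s"
    using q unfolding e2[symmetric] by simp
  moreover have "(Re z)\<^sup>2 + (Im z)\<^sup>2 = 1"
    using z by (simp add: cmod_power2[symmetric])
  ultimately have "(r * Re z + s)\<^sup>2 + (r * Im z)\<^sup>2 = (1 + 1 / sinh q * t * (2 * Re z - 2 * cosh q)) / 4"
    using e1 by (simp add: power2_eq_square algebra_simps) algebra
  moreover have "Re (complex_of_real r * z + complex_of_real s) = r * Re z + s"
    "Im (complex_of_real r * z + complex_of_real s) = r * Im z"
    by simp_all
  ultimately show ?thesis
    unfolding complex_mult_cnj by (simp only:)
qed

lemma in_Lambda_times_i:
  "in_Lambda R (\<lambda>i. \<chi> a b. \<i> * f i $ a $ b) \<longleftrightarrow> in_Lambda R f"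
  unfolding in_Lambda_def by (simp add: norm_vec_def norm_mult)

lemma loop_eval_times_i:
  "loop_eval (\<lambda>i. \<chi> a b. \<i> * f i $ a $ b) z = (\<chi> a b. \<i> * loop_eval f z $ a $ b)"
  unfolding loop_eval_def by (simp add: mult.assoc infsum_cmult_right')

text \<open>The eigenvalue \<open>|r\<lambda> + s|\<close> of \<open>A(\<lambda>)\<close>, see \<open>delaunay_offdiag_norm\<close>.\<close>

definition delaunay_eigenvalue :: "real \<Rightarrow> real \<Rightarrow> complex \<Rightarrow> real" where
  "delaunay_eigenvalue q t z = sqrt (1 + 1 / sinh q * t * (2 * Re z - 2 * cosh q)) / 2"

definition eigenvalue_coeffs :: "real \<Rightarrow> nat \<Rightarrow> int \<Rightarrow> complex" where
  "eigenvalue_coeffs q n i = 1 / 2 * binomial_powser (1 / 2) (1 / sinh q) (cosh q) n i"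

definition inverse_eigenvalue_coeffs :: "real \<Rightarrow> nat \<Rightarrow> int \<Rightarrow> complex" where
  "inverse_eigenvalue_coeffs q n i = 2 * binomial_powser (- 1 / 2) (1 / sinh q) (cosh q) n i"

text \<open>Coefficients of \<open>(r \<lambda>\<^sup>-\<^sup>m + s) / \<mu>\<close>, where \<open>\<mu>\<close> is the eigenvalue
  and \<open>r, s\<close> are given by \<open>delaunay_rs\<close>.\<close>

definition scaled_offdiag_coeffs :: "real \<Rightarrow> real \<Rightarrow> int \<Rightarrow> nat \<Rightarrow> int \<Rightarrow> complex" where
  "scaled_offdiag_coeffs q \<sigma> m n i =
     real_powser_times (delaunay_rs_coeff q \<sigma>) (\<lambda>n i. inverse_eigenvalue_coeffs q n (i + m)) n i
     + real_powser_times (delaunay_rs_coeff q (- \<sigma>)) (inverse_eigenvalue_coeffs q) n i"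

definition eigenvalue_matrix_coeffs :: "real \<Rightarrow> nat \<Rightarrow> int \<Rightarrow> mat2" where
  "eigenvalue_matrix_coeffs q n i =
     (\<chi> a b. if a \<noteq> b then 0 else if a = 1 then eigenvalue_coeffs q n i else - eigenvalue_coeffs q n i)"

definition diagonalizer_coeffs :: "real \<Rightarrow> real \<Rightarrow> nat \<Rightarrow> int \<Rightarrow> mat2" where
  "diagonalizer_coeffs q \<sigma> n i = (let k = complex_of_real (1 / sqrt 2) in
     \<chi> a b. if a = b then const_powser (- k) n i
            else if a = 1 then k * scaled_offdiag_coeffs q \<sigma> 1 n i
            else - k * scaled_offdiag_coeffs q \<sigma> (- 1) n i)"

context
  fixes q R :: real
  assumes q: "0 < q" and R: "1 \<le> R"
begin

lemma powser_in_Lambda_eigenvalue_coeffs: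
  "powser_in_Lambda R (delaunay_radius q R) (eigenvalue_coeffs q)"
  "powser_in_Lambda R (delaunay_radius q R) (inverse_eigenvalue_coeffs q)"
  unfolding eigenvalue_coeffs_def inverse_eigenvalue_coeffs_def
  by (intro powser_in_Lambda_mult_left powser_in_Lambda_binomial delaunay_radius_bounds(2)[OF q R] R)+

lemma delaunay_radius_scaled:
  assumes "\<bar>x\<bar> < delaunay_radius q R"
  shows "\<bar>2 * (1 - cosh q) / sinh q * x\<bar> < 1" and "\<bar>- 2 * (1 + cosh q) / sinh q * x\<bar> < 1"
proof -
  have "\<bar>y * x\<bar> < 1" if "\<bar>y\<bar> * delaunay_radius q R < 1" for y
    using mult_left_mono[of "\<bar>x\<bar>" "delaunay_radius q R" "\<bar>y\<bar>"] assms that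
    by (simp add: abs_mult)
  then show "\<bar>2 * (1 - cosh q) / sinh q * x\<bar> < 1" and "\<bar>- 2 * (1 + cosh q) / sinh q * x\<bar> < 1"
    using delaunay_radius_bounds(3,4)[OF q R] by blast+
qed

lemma summable_delaunay_rs_coeff_radius:
  assumes "0 \<le> \<rho>" "\<rho> < delaunay_radius q R" "\<bar>\<epsilon>\<bar> = 1"
  shows "summable (\<lambda>k. \<bar>delaunay_rs_coeff q \<epsilon> k\<bar> * \<rho> ^ k)"
  using delaunay_radius_scaled[of \<rho>] assms
  by (intro summable_delaunay_rs_coeff) (auto simp: abs_mult)

lemma powser_in_Lambda_scaled_offdiag_coeffs:
  assumes \<sigma>: "\<bar>\<sigma>\<bar> = 1" and m: "\<bar>m\<bar> \<le> 1"
  shows "powser_in_Lambda R (delaunay_radius q R) (scaled_offdiag_coeffs q \<sigma> m)"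
  unfolding scaled_offdiag_coeffs_def using \<sigma> R m powser_in_Lambda_eigenvalue_coeffs(2)
  by (intro powser_in_Lambda_add powser_in_Lambda_real_times powser_in_Lambda_shift
      summable_delaunay_rs_coeff_radius) auto

lemma powser_in_Lambda_eigenvalue_matrix_coeffs:
  "powser_in_Lambda R (delaunay_radius q R) (eigenvalue_matrix_coeffs q)"
proof (intro powser_in_Lambda_vec)
  fix a b :: 2
  show "powser_in_Lambda R (delaunay_radius q R) (\<lambda>n i. eigenvalue_matrix_coeffs q n i $ a $ b)"
    using powser_in_Lambda_eigenvalue_coeffs(1) powser_in_Lambda_mult_left[OF powser_in_Lambda_eigenvalue_coeffs(1), of "- 1"]
    by (cases "a = b"; cases "a = 1") (simp_all add: eigenvalue_matrix_coeffs_def powser_in_Lambda_zero)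
qed (use R in auto)

lemma powser_in_Lambda_diagonalizer_coeffs:
  assumes "\<bar>\<sigma>\<bar> = 1"
  shows "powser_in_Lambda R (delaunay_radius q R) (diagonalizer_coeffs q \<sigma>)"
proof (intro powser_in_Lambda_vec)
  fix a b :: 2
  show "powser_in_Lambda R (delaunay_radius q R) (\<lambda>n i. diagonalizer_coeffs q \<sigma> n i $ a $ b)"
    using powser_in_Lambda_mult_left[OF powser_in_Lambda_scaled_offdiag_coeffs[OF assms], of 1 "complex_of_real (1 / sqrt 2)"]
      powser_in_Lambda_mult_left[OF powser_in_Lambda_scaled_offdiag_coeffs[OF assms], of "- 1" "- complex_of_real (1 / sqrt 2)"]
    by (cases "a = b"; cases "a = 1") (simp_all add: diagonalizer_coeffs_def Let_def powser_in_Lambda_const)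
qed (use R in auto)

context
  fixes t :: real and z :: complex
  assumes t: "\<bar>t\<bar> < delaunay_radius q R" and z: "cmod z = 1"
begin

lemma
  shows delaunay_eigenvalue_pos: "0 < delaunay_eigenvalue q t z"
    and power2_delaunay_eigenvalue:
      "(delaunay_eigenvalue q t z)\<^sup>2 = (1 + 1 / sinh q * t * (2 * Re z - 2 * cosh q)) / 4"
proof -
  have "\<bar>1 / sinh q * t * (2 * Re z - 2 * cosh q)\<bar> < 1"
    using fourier_eval_binomial_powser(2)[OF delaunay_radius_bounds(2)[OF q R] R t z] .
  then have "0 < 1 + 1 / sinh q * t * (2 * Re z - 2 * cosh q)"
    by linarith
  then show "0 < delaunay_eigenvalue q t z"
    "(delaunay_eigenvalue q t z)\<^sup>2 = (1 + 1 / sinh q * t * (2 * Re z - 2 * cosh q)) / 4"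
    unfolding delaunay_eigenvalue_def by (simp_all add: power_divide)
qed

lemma fourier_eval_eigenvalue_coeffs:
  "fourier_eval (powser_eval (eigenvalue_coeffs q) t) z = complex_of_real (delaunay_eigenvalue q t z)"
  "fourier_eval (powser_eval (inverse_eigenvalue_coeffs q) t) z = complex_of_real (1 / delaunay_eigenvalue q t z)"
proof -
  let ?y = "1 / sinh q * t * (2 * Re z - 2 * cosh q)"
  note binomial = fourier_eval_binomial_powser[OF delaunay_radius_bounds(2)[OF q R] R t z]
  have pos: "0 < 1 + ?y"
    using binomial(2) by linarith
  have "fourier_eval (powser_eval (eigenvalue_coeffs q) t) z
      = fourier_eval (\<lambda>i. 1 / 2 * powser_eval (binomial_powser (1 / 2) (1 / sinh q) (cosh q)) t i) z"
    unfolding eigenvalue_coeffs_def powser_eval_mult_left ..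
  also have "\<dots> = complex_of_real (sqrt (1 + ?y) / 2)"
    unfolding fourier_eval_mult_left binomial(1) using pos by (simp add: powr_half_sqrt)
  finally show "fourier_eval (powser_eval (eigenvalue_coeffs q) t) z = complex_of_real (delaunay_eigenvalue q t z)"
    unfolding delaunay_eigenvalue_def .
  have "fourier_eval (powser_eval (inverse_eigenvalue_coeffs q) t) z
      = fourier_eval (\<lambda>i. 2 * powser_eval (binomial_powser (- 1 / 2) (1 / sinh q) (cosh q)) t i) z"
    unfolding inverse_eigenvalue_coeffs_def powser_eval_mult_left ..
  also have "\<dots> = complex_of_real (2 / sqrt (1 + ?y))"
    unfolding fourier_eval_mult_left binomial(1) using pos by (simp add: powr_minus_divide powr_half_sqrt)
  finally show "fourier_eval (powser_eval (inverse_eigenvalue_coeffs q) t) z = complex_of_real (1 / delaunay_eigenvalue q t z)"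
    unfolding delaunay_eigenvalue_def by simp
qed

lemma fourier_eval_scaled_offdiag_coeffs:
  assumes \<sigma>: "\<bar>\<sigma>\<bar> = 1" and m: "\<bar>m\<bar> \<le> 1"
  shows "fourier_eval (powser_eval (scaled_offdiag_coeffs q \<sigma> m) t) z =
    (complex_of_real (delaunay_rs q \<sigma> t) * z powi (- m) + complex_of_real (delaunay_rs q (- \<sigma>) t))
      / complex_of_real (delaunay_eigenvalue q t z)"
proof -
  let ?d = "delaunay_radius q R" and ?\<nu> = "inverse_eigenvalue_coeffs q"
  let ?r = "complex_of_real (delaunay_rs q \<sigma> t)" and ?s = "complex_of_real (delaunay_rs q (- \<sigma>) t)"
  have \<nu>: "powser_in_Lambda R ?d ?\<nu>" "powser_in_Lambda R ?d (\<lambda>n i. ?\<nu> n (i + m))"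
    using powser_in_Lambda_eigenvalue_coeffs(2) powser_in_Lambda_shift[OF _ R m] by auto
  have b: "\<And>\<rho>. 0 \<le> \<rho> \<Longrightarrow> \<rho> < ?d \<Longrightarrow> summable (\<lambda>k. \<bar>delaunay_rs_coeff q \<sigma> k\<bar> * \<rho> ^ k)"
    and b': "\<And>\<rho>. 0 \<le> \<rho> \<Longrightarrow> \<rho> < ?d \<Longrightarrow> summable (\<lambda>k. \<bar>delaunay_rs_coeff q (- \<sigma>) k\<bar> * \<rho> ^ k)"
    using \<sigma> by (simp_all add: summable_delaunay_rs_coeff_radius)
  have sums: "(\<lambda>k. delaunay_rs_coeff q \<epsilon> k * t ^ k) sums delaunay_rs q \<epsilon> t" for \<epsilon>
    using delaunay_radius_scaled[OF t] by (rule delaunay_rs_coeff_sums)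
  have "powser_in_Lambda R ?d (real_powser_times (delaunay_rs_coeff q \<sigma>) (\<lambda>n i. ?\<nu> n (i + m)))"
    "powser_in_Lambda R ?d (real_powser_times (delaunay_rs_coeff q (- \<sigma>)) ?\<nu>)"
    using powser_in_Lambda_real_times[OF b \<nu>(2)] powser_in_Lambda_real_times[OF b' \<nu>(1)] R by simp_all
  note sum_eval = powser_eval_add[OF this R t]
  have "powser_eval (scaled_offdiag_coeffs q \<sigma> m) t
      = (\<lambda>i. ?r * powser_eval (\<lambda>n i. ?\<nu> n (i + m)) t i + ?s * powser_eval ?\<nu> t i)"
    unfolding scaled_offdiag_coeffs_def
    by (simp add: fun_eq_iff sum_eval powser_eval_real_times[OF b \<nu>(2) R t sums]
        powser_eval_real_times[OF b' \<nu>(1) R t sums])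
  then have "fourier_eval (powser_eval (scaled_offdiag_coeffs q \<sigma> m) t) z
      = ?r * fourier_eval (powser_eval (\<lambda>n i. ?\<nu> n (i + m)) t) z + ?s * fourier_eval (powser_eval ?\<nu> t) z"
    using fourier_eval_powser_lincomb[OF \<nu>(2,1) R t z] by simp
  also have "fourier_eval (powser_eval (\<lambda>n i. ?\<nu> n (i + m)) t) z = z powi (- m) * fourier_eval (powser_eval ?\<nu> t) z"
  proof -
    have "z \<noteq> 0"
      using z by auto
    from fourier_eval_shift[OF this, of "powser_eval ?\<nu> t" m]
    show ?thesis
      unfolding powser_eval_def .
  qed
  finally show ?thesis
    unfolding fourier_eval_eigenvalue_coeffs(2) using delaunay_eigenvalue_pos by (simp add: field_simps)
qed

lemma loop_eval_eigenvalue_matrix_coeffs: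
  "loop_eval (powser_eval (eigenvalue_matrix_coeffs q) t) z = diag_pm (delaunay_eigenvalue q t z)"
proof -
  show ?thesis
    unfolding vec_eq_iff loop_eval_powser_eval[OF powser_in_Lambda_eigenvalue_matrix_coeffs R t]
    by (simp add: forall_2 eigenvalue_matrix_coeffs_def diag_pm_def powser_eval_uminus powser_eval_zero
        fourier_eval_uminus fourier_eval_zero fourier_eval_eigenvalue_coeffs)
qed

lemma loop_eval_diagonalizer_coeffs:
  assumes "\<bar>\<sigma>\<bar> = 1"
  shows "loop_eval (powser_eval (diagonalizer_coeffs q \<sigma>) t) z = offdiag_diagonalizer
    (complex_of_real (delaunay_rs q \<sigma> t) * z + complex_of_real (delaunay_rs q (- \<sigma>) t)) (delaunay_eigenvalue q t z)"
proof -
  define k where "k = complex_of_real (1 / sqrt 2)"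
  show ?thesis
    unfolding vec_eq_iff loop_eval_powser_eval[OF powser_in_Lambda_diagonalizer_coeffs[OF assms] R t]
      diagonalizer_coeffs_def offdiag_diagonalizer_def Let_def k_def[symmetric]
    using z delaunay_eigenvalue_pos
    by (simp add: forall_2 fourier_eval_const_powser powser_eval_mult_left powser_eval_uminus
      fourier_eval_mult_left fourier_eval_uminus
      fourier_eval_scaled_offdiag_coeffs[OF assms] inverse_unit_complex[symmetric] field_simps)
qed

lemma delaunay_diagonalization:
  assumes "r\<^sup>2 + s\<^sup>2 + 2 * r * s * cosh q = 1/4" "4 * r * s * sinh q = t"
  defines "w \<equiv> complex_of_real r * z + complex_of_real s" and "\<mu> \<equiv> delaunay_eigenvalue q t z"
  shows "offdiag_diagonalizer w \<mu> \<in> SU2" and "(\<chi> a b. \<i> * diag_pm \<mu> $ a $ b) \<in> su2"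
    and "is_diagonal (diag_pm \<mu>)" and "offdiag_diagonalizer w \<mu> ** diag_pm \<mu> ** matrix_inv (offdiag_diagonalizer w \<mu>) = offdiag w"
proof -
  have "w * cnj w = complex_of_real ((1 + 1 / sinh q * t * (2 * Re z - 2 * cosh q)) / 4)"
    unfolding w_def by (rule delaunay_offdiag_norm[OF assms(1,2) q z])
  also have "\<dots> = complex_of_real (\<mu>\<^sup>2)"
    unfolding \<mu>_def power2_delaunay_eigenvalue ..
  finally have "w * cnj w = complex_of_real (\<mu>\<^sup>2)" .
  from offdiag_diagonalization[OF delaunay_eigenvalue_pos[folded \<mu>_def] this]
  show "offdiag_diagonalizer w \<mu> \<in> SU2" "(\<chi> a b. \<i> * diag_pm \<mu> $ a $ b) \<in> su2"
    "is_diagonal (diag_pm \<mu>)" "offdiag_diagonalizer w \<mu> ** diag_pm \<mu> ** matrix_inv (offdiag_diagonalizer w \<mu>) = offdiag w"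
    by blast+
qed

end

lemma delaunay_factorization:
  assumes \<sigma>: "\<bar>\<sigma>\<bar> = 1" and family: "delaunay_residue_family q r s"
    and t: "\<bar>t\<bar> < delaunay_radius q R" "t < Tmax q"
    and closed: "r t = delaunay_rs q \<sigma> t \<and> s t = delaunay_rs q (- \<sigma>) t"
  shows "powser_eval (diagonalizer_coeffs q \<sigma>) t \<in> LambdaSU2 R \<and>
    (\<lambda>i. \<chi> a b. \<i> * (powser_eval (eigenvalue_matrix_coeffs q) t i $ a $ b)) \<in> Lambdasu2 R \<and>
    (\<forall>z. cmod z = 1 \<longrightarrow>
       is_diagonal (loop_eval (powser_eval (eigenvalue_matrix_coeffs q) t) z) \<and>
       A_rs (r t) (s t) z = loop_eval (powser_eval (diagonalizer_coeffs q \<sigma>) t) z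
         ** loop_eval (powser_eval (eigenvalue_matrix_coeffs q) t) z
         ** matrix_inv (loop_eval (powser_eval (diagonalizer_coeffs q \<sigma>) t) z))"
proof -
  have "(r t)\<^sup>2 + (s t)\<^sup>2 + 2 * r t * s t * cosh q = 1/4" "4 * r t * s t * sinh q = t"
    using family t(2) unfolding delaunay_residue_family_def by auto
  note diagonalization = delaunay_diagonalization[OF t(1) _ this]
  note D = loop_eval_eigenvalue_matrix_coeffs[OF t(1)]
  have H: "loop_eval (powser_eval (diagonalizer_coeffs q \<sigma>) t) z = offdiag_diagonalizer
      (complex_of_real (r t) * z + complex_of_real (s t)) (delaunay_eigenvalue q t z)" if "cmod z = 1" for z
    using loop_eval_diagonalizer_coeffs[OF t(1) that \<sigma>] closed by simp
  have "powser_eval (diagonalizer_coeffs q \<sigma>) t \<in> LambdaSU2 R"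
    unfolding LambdaSU2_def in_Lambda_def
    using powser_eval_weighted_summable[OF powser_in_Lambda_diagonalizer_coeffs[OF \<sigma>] R t(1)]
      diagonalization(1) H by simp
  moreover have "(\<lambda>i. \<chi> a b. \<i> * (powser_eval (eigenvalue_matrix_coeffs q) t i $ a $ b)) \<in> Lambdasu2 R"
    unfolding Lambdasu2_def mem_Collect_eq in_Lambda_times_i loop_eval_times_i
    using powser_eval_weighted_summable[OF powser_in_Lambda_eigenvalue_matrix_coeffs R t(1)]
      diagonalization(2) D by (simp add: in_Lambda_def)
  ultimately show ?thesis
    using diagonalization(3,4) D H A_rs_eq_offdiag by simp
qed

end

lemma arcoth_pos: "1 < H \<Longrightarrow> 0 < arcoth H"
  unfolding arcoth_def by simp

lemma delaunay_residue_family_closed_form: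
  assumes q: "0 < q" and family: "delaunay_residue_family q r s"
  obtains \<delta> \<sigma> where "0 < \<delta>" "\<bar>\<sigma>\<bar> = 1"
    "\<And>t. \<bar>t\<bar> < \<delta> \<Longrightarrow> t < Tmax q \<Longrightarrow> r t = delaunay_rs q \<sigma> t \<and> s t = delaunay_rs q (- \<sigma>) t"
proof -
  have cont: "continuous_on {..<Tmax q} (\<lambda>t. r t + s t)"
    and eqs: "\<And>t. t < Tmax q \<Longrightarrow> (r t)\<^sup>2 + (s t)\<^sup>2 + 2 * r t * s t * cosh q = 1/4 \<and> 4 * r t * s t * sinh q = t"
    using family unfolding delaunay_residue_family_def by (auto intro: continuous_on_add)
  obtain \<sigma> :: real where \<sigma>: "\<bar>\<sigma>\<bar> = 1" and sign: "\<And>t. t < Tmax q \<Longrightarrow> \<sigma> * (r t - s t) > 0"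
    and rs0: "r 0 + s 0 = 1/2"
  proof (cases "r 0 = 1/2 \<and> s 0 = 0 \<and> (\<forall>t < Tmax q. r t > s t)")
    case True
    then show ?thesis
      using that[of 1] by auto
  next
    case False
    then have "r 0 = 0 \<and> s 0 = 1/2 \<and> (\<forall>t < Tmax q. r t < s t)"
      using family unfolding delaunay_residue_family_def by blast
    then show ?thesis
      using that[of "- 1"] by auto
  qed
  have "0 < Tmax q"
    using q unfolding Tmax_def by simp
  then have "isCont (\<lambda>t. r t + s t) 0"
    using cont continuous_on_interior[of "{..<Tmax q}"] by (simp add: interior_open)
  then have "(\<lambda>t. r t + s t) \<midarrow>0\<rightarrow> 1/2"
    using rs0 by (simp add: isCont_def)
  then obtain \<delta> where \<delta>: "0 < \<delta>" and pos: "\<And>t. t \<noteq> 0 \<Longrightarrow> \<bar>0 - t\<bar> < \<delta> \<Longrightarrow> 0 < r t + s t"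
    using LIM_fun_gt_zero[of _ "1/2" 0] by force
  show ?thesis
  proof (rule that[OF \<delta> \<sigma>])
    fix t
    assume "\<bar>t\<bar> < \<delta>" "t < Tmax q"
    moreover have "0 < r t + s t"
      using pos[of t] \<open>\<bar>t\<bar> < \<delta>\<close> rs0 by (cases "t = 0") auto
    ultimately show "r t = delaunay_rs q \<sigma> t \<and> s t = delaunay_rs q (- \<sigma>) t"
      using delaunay_rs_eqI[OF q _ _ _ \<sigma> sign] eqs by blast
  qed
qed

theorem proposition2:
  fixes H q \<rho> T :: real and r s :: "real \<Rightarrow> real"
  assumes "H > 1" and "q = arcoth H"
    and "\<rho> > exp q"
    and "0 < T" and "T < Tmax q"
    and "delaunay_residue_family q r s"
  shows "\<exists>R T'. exp q < R \<and> R < \<rho> \<and> 0 < T' \<and> T' < T \<and>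
    (\<exists>Hl Dl :: real \<Rightarrow> loop.
       (\<forall>t\<in>{-T'<..<T'}.
          Hl t \<in> LambdaSU2 R \<and>
          (\<lambda>i. \<chi> a b. \<i> * (Dl t i $ a $ b)) \<in> Lambdasu2 R \<and>
          (\<forall>z. cmod z = 1 \<longrightarrow>
             is_diagonal (loop_eval (Dl t) z) \<and>
             A_rs (r t) (s t) z = loop_eval (Hl t) z ** loop_eval (Dl t) z ** matrix_inv (loop_eval (Hl t) z))) \<and>
       loop_smooth_on R {-T'<..<T'} Hl \<and> loop_smooth_on R {-T'<..<T'} Dl)"
proof -
  have q: "0 < q"
    using assms(1,2) by (simp add: arcoth_pos)
  obtain \<delta> \<sigma> where \<delta>: "0 < \<delta>" and \<sigma>: "\<bar>\<sigma>\<bar> = 1"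
    and closed: "\<And>t. \<bar>t\<bar> < \<delta> \<Longrightarrow> t < Tmax q \<Longrightarrow> r t = delaunay_rs q \<sigma> t \<and> s t = delaunay_rs q (- \<sigma>) t"
    using delaunay_residue_family_closed_form[OF q assms(6)] by blast
  define R where "R = (exp q + \<rho>) / 2"
  have "1 < exp q"
    using q by simp
  then have R: "exp q < R" "R < \<rho>" "1 \<le> R"
    using assms(3) unfolding R_def by (simp_all del: one_less_exp_iff)
  define T' where "T' = min (T / 2) (min (delaunay_radius q R) \<delta>)"
  have T': "0 < T'" "T' < T" "T' \<le> delaunay_radius q R"
    using assms(4) \<delta> delaunay_radius_bounds(1)[OF q R(3)] unfolding T'_def by auto
  have t: "\<bar>t\<bar> < delaunay_radius q R" "t < Tmax q" "r t = delaunay_rs q \<sigma> t \<and> s t = delaunay_rs q (- \<sigma>) t"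
    if "t \<in> {-T'<..<T'}" for t
    using that T' assms(5) closed unfolding T'_def by auto
  show ?thesis
    using R T' delaunay_factorization[OF q R(3) \<sigma> assms(6) t]
      powser_loop_smooth[OF powser_in_Lambda_diagonalizer_coeffs[OF q R(3) \<sigma>] R(3) T'(3)]
      powser_loop_smooth[OF powser_in_Lambda_eigenvalue_matrix_coeffs[OF q R(3)] R(3) T'(3)]
    by blast
qed

end
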